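(* Let $G\in\mathcal{C}$, let $H$ be a hole of $G$, let $u,v$ be two non-adjacent major vertices for $H$, and let $P=u'\text{-}\cdots\text{-}u''$ be a $u$-sector of $H$. Then one of the following holds: (i) $P$ contains at most one neighbor of $v$, and if it contains one, that neighbor is $u'$ or $u''$; (ii) $u'u''\in E(G)$ and $v$ is adjacent to both $u'$ and $u''$; (iii) $P$ contains at least three neighbors of $v$; (iv) $G[V(H)\cup\{u,v\}]$ is isomorphic to the cube graph (the 1-skeleton of the 3-dimensional cube).
   Context: All graphs are finite and simple; paths are induced paths; a hole is an induced cycle of length at least four. $\mathcal{C}$ is the class of graphs containing no theta, pyramid, prism or turtle as an induced subgraph, where: a theta consists of two nonadjacent vertices $a,b$ and three paths from $a$ to $b$, otherwise vertex-disjoint, any two of which induce a hole; a pyramid consists of a vertex $a$, a triangle $\{b_1,b_2,b_3\}$ and paths $P_i$ from $a$ to $b_i$, pairwise disjoint except at $a$, any two of which induce a hole; a prism consists of two disjoint triangles $\{a_1,a_2,a_3\},\{b_1,b_2,b_3\}$ and pairwise disjoint paths $P_i$ from $a_i$ to $b_i$, any two of which induce a hole; a turtle consists of disjoint paths $P_1$ (from $a_1$ to $b_1$), $P_2$ (from $a_2$ to $b_2$) with $a_1a_2,b_1b_2$ edges and $V(P_1)\cup V(P_2)$ inducing a hole, plus adjacent vertices $x,y$ where $x$ has at least three neighbors in $P_1$ and none in $P_2$, and $y$ has at least three neighbors in $P_2$ and none in $P_1$. For a hole $H$ and $u\notin V(H)$, $N_H(u)$ is the set of neighbors of $u$ in $H$.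 A vertex $u\notin V(H)$ is minor for $H$ if $N_H(u)\neq\emptyset$ and $N_H(u)$ is contained in the vertex set of some three-vertex subpath of $H$; it is major for $H$ if $N_H(u)\ne\emptyset$ and $u$ is not minor. For $u\notin V(H)$ with at least two neighbors in $H$, a $u$-sector is a subpath $P=u'\text{-}\cdots\text{-}u''$ of $H$ whose ends $u',u''$ are neighbors of $u$ and whose interior (vertices other than $u',u''$) contains no neighbor of $u$. *)

theory Defs
  imports Main
begin

definition graph :: "'a set \<Rightarrow> ('a \<Rightarrow> 'a \<Rightarrow> bool) \<Rightarrow> bool" where
  "graph V E \<longleftrightarrow> finite V \<and> (\<forall>x y. E x y \<longrightarrow> x \<in> V \<and> y \<in> V)
     \<and> (\<forall>x y. E x y \<longrightarrow> E y x) \<and> (\<forall>x. \<not> E x x)"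

definition is_path :: "'a set \<Rightarrow> ('a \<Rightarrow> 'a \<Rightarrow> bool) \<Rightarrow> 'a list \<Rightarrow> bool" where
  "is_path V E P \<longleftrightarrow> P \<noteq> [] \<and> distinct P \<and> set P \<subseteq> V \<and>
     (\<forall>i j. i < length P \<longrightarrow> j < length P \<longrightarrow> (E (P!i) (P!j) \<longleftrightarrow> (j = i + 1 \<or> i = j + 1)))"

definition path_from_to :: "'a set \<Rightarrow> ('a \<Rightarrow> 'a \<Rightarrow> bool) \<Rightarrow> 'a list \<Rightarrow> 'a \<Rightarrow> 'a \<Rightarrow> bool" where
  "path_from_to V E P a b \<longleftrightarrow> is_path V E P \<and> hd P = a \<and> last P = b"

definition is_hole :: "'a set \<Rightarrow> ('a \<Rightarrow> 'a \<Rightarrow> bool) \<Rightarrow> 'a list \<Rightarrow> bool" where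
  "is_hole V E C \<longleftrightarrow> length C \<ge> 4 \<and> distinct C \<and> set C \<subseteq> V \<and>
     (\<forall>i j. i < length C \<longrightarrow> j < length C \<longrightarrow>
        (E (C!i) (C!j) \<longleftrightarrow> (j = Suc i mod length C \<or> i = Suc j mod length C)))"

definition induces_hole :: "'a set \<Rightarrow> ('a \<Rightarrow> 'a \<Rightarrow> bool) \<Rightarrow> 'a set \<Rightarrow> bool" where
  "induces_hole V E S \<longleftrightarrow> (\<exists>C. is_hole V E C \<and> set C = S)"

definition triangle :: "('a \<Rightarrow> 'a \<Rightarrow> bool) \<Rightarrow> 'a \<Rightarrow> 'a \<Rightarrow> 'a \<Rightarrow> bool" where
  "triangle E x y z \<longleftrightarrow> E x y \<and> E y z \<and> E x z"

definition has_theta :: "'a set \<Rightarrow> ('a \<Rightarrow> 'a \<Rightarrow> bool) \<Rightarrow> bool" where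
  "has_theta V E \<longleftrightarrow> (\<exists>a b P1 P2 P3. a \<noteq> b \<and> \<not> E a b \<and>
     path_from_to V E P1 a b \<and> path_from_to V E P2 a b \<and> path_from_to V E P3 a b \<and>
     set P1 \<inter> set P2 = {a, b} \<and> set P1 \<inter> set P3 = {a, b} \<and> set P2 \<inter> set P3 = {a, b} \<and>
     induces_hole V E (set P1 \<union> set P2) \<and> induces_hole V E (set P1 \<union> set P3) \<and>
     induces_hole V E (set P2 \<union> set P3))"

definition has_pyramid :: "'a set \<Rightarrow> ('a \<Rightarrow> 'a \<Rightarrow> bool) \<Rightarrow> bool" where
  "has_pyramid V E \<longleftrightarrow> (\<exists>a b1 b2 b3 P1 P2 P3. triangle E b1 b2 b3 \<and>
     path_from_to V E P1 a b1 \<and> path_from_to V E P2 a b2 \<and> path_from_to V E P3 a b3 \<and>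
     set P1 \<inter> set P2 = {a} \<and> set P1 \<inter> set P3 = {a} \<and> set P2 \<inter> set P3 = {a} \<and>
     induces_hole V E (set P1 \<union> set P2) \<and> induces_hole V E (set P1 \<union> set P3) \<and>
     induces_hole V E (set P2 \<union> set P3))"

definition has_prism :: "'a set \<Rightarrow> ('a \<Rightarrow> 'a \<Rightarrow> bool) \<Rightarrow> bool" where
  "has_prism V E \<longleftrightarrow> (\<exists>a1 a2 a3 b1 b2 b3 P1 P2 P3.
     triangle E a1 a2 a3 \<and> triangle E b1 b2 b3 \<and>
     {a1, a2, a3} \<inter> {b1, b2, b3} = {} \<and>
     path_from_to V E P1 a1 b1 \<and> path_from_to V E P2 a2 b2 \<and> path_from_to V E P3 a3 b3 \<and>
     set P1 \<inter> set P2 = {} \<and> set P1 \<inter> set P3 = {} \<and> set P2 \<inter> set P3 = {} \<and>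
     induces_hole V E (set P1 \<union> set P2) \<and> induces_hole V E (set P1 \<union> set P3) \<and>
     induces_hole V E (set P2 \<union> set P3))"

definition has_turtle :: "'a set \<Rightarrow> ('a \<Rightarrow> 'a \<Rightarrow> bool) \<Rightarrow> bool" where
  "has_turtle V E \<longleftrightarrow> (\<exists>a1 b1 a2 b2 P1 P2 x y.
     path_from_to V E P1 a1 b1 \<and> path_from_to V E P2 a2 b2 \<and> set P1 \<inter> set P2 = {} \<and>
     E a1 a2 \<and> E b1 b2 \<and> induces_hole V E (set P1 \<union> set P2) \<and>
     x \<in> V \<and> y \<in> V \<and> x \<notin> set P1 \<union> set P2 \<and> y \<notin> set P1 \<union> set P2 \<and> E x y \<and>
     card {z \<in> set P1. E x z} \<ge> 3 \<and> (\<forall>z \<in> set P2. \<not> E x z) \<and>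
     card {z \<in> set P2. E y z} \<ge> 3 \<and> (\<forall>z \<in> set P1. \<not> E y z))"

definition in_class_C :: "'a set \<Rightarrow> ('a \<Rightarrow> 'a \<Rightarrow> bool) \<Rightarrow> bool" where
  "in_class_C V E \<longleftrightarrow> \<not> has_theta V E \<and> \<not> has_pyramid V E \<and> \<not> has_prism V E \<and> \<not> has_turtle V E"

text \<open>Subpath of the hole H: a path of G whose vertices lie in H (H is induced).\<close>
definition subpath_of_hole :: "'a set \<Rightarrow> ('a \<Rightarrow> 'a \<Rightarrow> bool) \<Rightarrow> 'a list \<Rightarrow> 'a list \<Rightarrow> bool" where
  "subpath_of_hole V E H P \<longleftrightarrow> is_path V E P \<and> set P \<subseteq> set H"

definition nbrs_in :: "('a \<Rightarrow> 'a \<Rightarrow> bool) \<Rightarrow> 'a \<Rightarrow> 'a set \<Rightarrow> 'a set" where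
  "nbrs_in E u S = {x \<in> S. E u x}"

definition minor :: "'a set \<Rightarrow> ('a \<Rightarrow> 'a \<Rightarrow> bool) \<Rightarrow> 'a list \<Rightarrow> 'a \<Rightarrow> bool" where
  "minor V E H u \<longleftrightarrow> u \<in> V \<and> u \<notin> set H \<and> nbrs_in E u (set H) \<noteq> {} \<and>
     (\<exists>Q. subpath_of_hole V E H Q \<and> length Q = 3 \<and> nbrs_in E u (set H) \<subseteq> set Q)"

definition major :: "'a set \<Rightarrow> ('a \<Rightarrow> 'a \<Rightarrow> bool) \<Rightarrow> 'a list \<Rightarrow> 'a \<Rightarrow> bool" where
  "major V E H u \<longleftrightarrow> u \<in> V \<and> u \<notin> set H \<and> nbrs_in E u (set H) \<noteq> {} \<and> \<not> minor V E H u"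

definition sector :: "'a set \<Rightarrow> ('a \<Rightarrow> 'a \<Rightarrow> bool) \<Rightarrow> 'a list \<Rightarrow> 'a \<Rightarrow> 'a list \<Rightarrow> 'a \<Rightarrow> 'a \<Rightarrow> bool" where
  "sector V E H u P u' u'' \<longleftrightarrow> u \<in> V \<and> u \<notin> set H \<and> card (nbrs_in E u (set H)) \<ge> 2 \<and>
     subpath_of_hole V E H P \<and> hd P = u' \<and> last P = u'' \<and> E u u' \<and> E u u'' \<and>
     (\<forall>x \<in> set P - {u', u''}. \<not> E u x)"

definition cube_adj :: "bool \<times> bool \<times> bool \<Rightarrow> bool \<times> bool \<times> bool \<Rightarrow> bool" where
  "cube_adj p q \<longleftrightarrow> (case p of (a, b, c) \<Rightarrow> case q of (a', b', c') \<Rightarrow>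
      (a \<noteq> a' \<and> b = b' \<and> c = c') \<or> (a = a' \<and> b \<noteq> b' \<and> c = c') \<or> (a = a' \<and> b = b' \<and> c \<noteq> c'))"

definition induced_iso_cube :: "('a \<Rightarrow> 'a \<Rightarrow> bool) \<Rightarrow> 'a set \<Rightarrow> bool" where
  "induced_iso_cube E S \<longleftrightarrow> (\<exists>f. bij_betw f S (UNIV :: (bool \<times> bool \<times> bool) set) \<and>
     (\<forall>x \<in> S. \<forall>y \<in> S. E x y \<longleftrightarrow> cube_adj (f x) (f y)))"

end

theory Submission
  imports Defs
begin

text \<open>Enumerate the hole as \<open>h 0, \<dots>, h (n - 1)\<close> so that the \<open>u\<close>-sector is
  \<open>h 0, \<dots>, h m\<close>. Apart from the trivial cases, \<open>m \<ge> 2\<close> and \<open>v\<close> has on the sector either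
  a single neighbour, which is interior, or two neighbours, which are consecutive (two
  nonconsecutive ones close a theta through \<open>u\<close>). Everything then depends on the neighbours of
  \<open>u\<close> and \<open>v\<close> on the rest \<open>h (m + 1), \<dots>, h (n - 1)\<close> of the hole: in every arrangement of
  their extreme neighbours there one finds a theta, a pyramid or a prism, except when the hole
  is a hexagon met alternately by \<open>u\<close> and \<open>v\<close>, which gives the cube. The reflection of the
  hole that fixes the sector setwise halves the case analysis.\<close>

lemma subset_doubleton_cases:
  assumes "A \<subseteq> {a, b}" "A \<noteq> {}" "A \<noteq> {a}" "A \<noteq> {b}"
  shows "A = {a, b}"
  using assms by auto

lemma Int_atMost_Min:
  fixes A :: "'a::linorder set"
  assumes "finite A" "A \<noteq> {}"
  shows "A \<inter> {..Min A} = {Min A}"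
  using Min_in[OF assms] Min_le[OF assms(1)] by (auto intro: antisym)

lemma Int_atLeast_Max:
  fixes A :: "'a::linorder set"
  assumes "finite A" "A \<noteq> {}"
  shows "A \<inter> {Max A..} = {Max A}"
  using Max_in[OF assms] Max_ge[OF assms(1)] by (auto intro: antisym)

lemma closest_pair_nat:
  fixes A B :: "nat set"
  assumes "A \<noteq> {}" "B \<noteq> {}"
  obtains a b where "a \<le> b" "A \<inter> {a..b} = {a}" "B \<inter> {a..b} = {b}"
    | a b where "b \<le> a" "A \<inter> {b..a} = {a}" "B \<inter> {b..a} = {b}"
proof -
  let ?d = "\<lambda>(a, b). max a b - min a b :: nat"
  obtain a0 b0 where "a0 \<in> A" "b0 \<in> B" using assms by blast
  then obtain a b where ab: "a \<in> A" "b \<in> B"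
    and closest: "\<And>a' b'. a' \<in> A \<Longrightarrow> b' \<in> B \<Longrightarrow> max a b - min a b \<le> max a' b' - min a' b'"
    using ex_has_least_nat[of "\<lambda>(a, b). a \<in> A \<and> b \<in> B" "(a0, b0)" ?d] by auto
  show thesis
  proof (cases "a \<le> b")
    case True
    have "i = a" if "i \<in> A" "a \<le> i" "i \<le> b" for i
      using closest[OF that(1) ab(2)] that True by simp
    moreover have "i = b" if "i \<in> B" "a \<le> i" "i \<le> b" for i
      using closest[OF ab(1) that(1)] that True by simp
    ultimately have "A \<inter> {a..b} = {a}" "B \<inter> {a..b} = {b}" using ab True by auto
    then show thesis using that(1)[OF True] by blast
  next
    case False
    have "i = a" if "i \<in> A" "b \<le> i" "i \<le> a" for i
      using closest[OF that(1) ab(2)] that False by simp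
    moreover have "i = b" if "i \<in> B" "b \<le> i" "i \<le> a" for i
      using closest[OF ab(1) that(1)] that False by simp
    ultimately have "A \<inter> {b..a} = {a}" "B \<inter> {b..a} = {b}" using ab False by auto
    then show thesis using that(2)[of b a] False by simp
  qed
qed

definition list_adj :: "'a list \<Rightarrow> 'a \<Rightarrow> 'a \<Rightarrow> bool" where
  "list_adj L x y \<longleftrightarrow> (\<exists>i. Suc i < length L \<and> ((L!i = x \<and> L!Suc i = y) \<or> (L!i = y \<and> L!Suc i = x)))"

lemma list_adj_Nil[simp]: "\<not> list_adj [] x y"
  by (simp add: list_adj_def)

lemma list_adj_singleton[simp]: "\<not> list_adj [a] x y"
  by (simp add: list_adj_def)

lemma list_adj_Cons:
  "list_adj (a # L) x y \<longleftrightarrow> list_adj L x y \<or> (L \<noteq> [] \<and> ((a = x \<and> hd L = y) \<or> (a = y \<and> hd L = x)))"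
proof
  assume "list_adj (a # L) x y"
  then obtain i where i: "Suc i < length (a # L)"
    "((a # L)!i = x \<and> (a # L)!Suc i = y) \<or> ((a # L)!i = y \<and> (a # L)!Suc i = x)"
    unfolding list_adj_def by blast
  show "list_adj L x y \<or> (L \<noteq> [] \<and> ((a = x \<and> hd L = y) \<or> (a = y \<and> hd L = x)))"
  proof (cases i)
    case 0
    then show ?thesis using i by (cases L) auto
  next
    case (Suc j)
    then show ?thesis using i unfolding list_adj_def by auto
  qed
next
  assume "list_adj L x y \<or> (L \<noteq> [] \<and> ((a = x \<and> hd L = y) \<or> (a = y \<and> hd L = x)))"
  then show "list_adj (a # L) x y"
  proof
    assume "list_adj L x y"
    then obtain i where "Suc i < length L" "(L!i = x \<and> L!Suc i = y) \<or> (L!i = y \<and> L!Suc i = x)"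
      unfolding list_adj_def by blast
    then show ?thesis unfolding list_adj_def by (intro exI[of _ "Suc i"]) simp
  next
    assume "L \<noteq> [] \<and> ((a = x \<and> hd L = y) \<or> (a = y \<and> hd L = x))"
    then show ?thesis unfolding list_adj_def by (intro exI[of _ 0]) (cases L, auto)
  qed
qed

lemma list_adj_append: "list_adj (L1 @ L2) x y \<longleftrightarrow> list_adj L1 x y \<or> list_adj L2 x y \<or>
   (L1 \<noteq> [] \<and> L2 \<noteq> [] \<and> ((last L1 = x \<and> hd L2 = y) \<or> (last L1 = y \<and> hd L2 = x)))"
proof (induction L1)
  case Nil
  then show ?case by simp
next
  case (Cons a L1)
  show ?case
  proof (cases L1)
    case Nil
    then show ?thesis by (cases L2) (auto simp: list_adj_Cons)
  next
    case (Cons b L1')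
    then show ?thesis using Cons.IH by (auto simp: list_adj_Cons)
  qed
qed

lemma list_adj_rev[simp]: "list_adj (rev L) x y \<longleftrightarrow> list_adj L x y"
proof (induction L)
  case Nil
  then show ?case by simp
next
  case (Cons a L)
  then show ?case
    by (cases L) (auto simp: list_adj_append list_adj_Cons)
qed

lemma list_adj_in_set: "list_adj L x y \<Longrightarrow> x \<in> set L \<and> y \<in> set L"
  by (auto simp: list_adj_def)

lemma list_adj_nth_iff:
  assumes "distinct L" "i < length L" "j < length L"
  shows "list_adj L (L!i) (L!j) \<longleftrightarrow> (j = i + 1 \<or> i = j + 1)"
proof
  assume "list_adj L (L!i) (L!j)"
  then obtain k where k: "Suc k < length L" "(L!k = L!i \<and> L!Suc k = L!j) \<or> (L!k = L!j \<and> L!Suc k = L!i)"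
    by (auto simp: list_adj_def)
  have kl: "k < length L" using k(1) by simp
  show "j = i + 1 \<or> i = j + 1"
    using k(2)
  proof
    assume "L!k = L!i \<and> L!Suc k = L!j"
    then have "k = i" "Suc k = j"
      using nth_eq_iff_index_eq[OF assms(1) kl assms(2)] nth_eq_iff_index_eq[OF assms(1) k(1) assms(3)] by auto
    then show ?thesis by simp
  next
    assume "L!k = L!j \<and> L!Suc k = L!i"
    then have "k = j" "Suc k = i"
      using nth_eq_iff_index_eq[OF assms(1) kl assms(3)] nth_eq_iff_index_eq[OF assms(1) k(1) assms(2)] by auto
    then show ?thesis by simp
  qed
next
  assume "j = i + 1 \<or> i = j + 1"
  then show "list_adj L (L!i) (L!j)"
  proof
    assume "j = i + 1" then show ?thesis unfolding list_adj_def using assms by (intro exI[of _ i]) auto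
  next
    assume "i = j + 1" then show ?thesis unfolding list_adj_def using assms by (intro exI[of _ j]) auto
  qed
qed

lemma is_path_iff_list_adj:
  "is_path V E L \<longleftrightarrow> L \<noteq> [] \<and> distinct L \<and> set L \<subseteq> V \<and>
     (\<forall>x\<in>set L. \<forall>y\<in>set L. E x y \<longleftrightarrow> list_adj L x y)"
proof
  assume p: "is_path V E L"
  then have d: "distinct L" and ne: "L \<noteq> []" and s: "set L \<subseteq> V"
    and e: "\<And>i j. i < length L \<Longrightarrow> j < length L \<Longrightarrow> E (L!i) (L!j) \<longleftrightarrow> (j = i + 1 \<or> i = j + 1)"
    unfolding is_path_def by blast+
  have "E x y \<longleftrightarrow> list_adj L x y" if xy: "x \<in> set L" "y \<in> set L" for x y
  proof -
    obtain i where i: "i < length L" "L!i = x"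
      using xy(1) by (auto simp: in_set_conv_nth)
    obtain j where j: "j < length L" "L!j = y"
      using xy(2) by (auto simp: in_set_conv_nth)
    show ?thesis using e[OF i(1) j(1)] list_adj_nth_iff[OF d i(1) j(1)] i(2)[symmetric] j(2)[symmetric] by simp
  qed
  then show "L \<noteq> [] \<and> distinct L \<and> set L \<subseteq> V \<and> (\<forall>x\<in>set L. \<forall>y\<in>set L. E x y \<longleftrightarrow> list_adj L x y)"
    using d ne s by blast
next
  assume a: "L \<noteq> [] \<and> distinct L \<and> set L \<subseteq> V \<and> (\<forall>x\<in>set L. \<forall>y\<in>set L. E x y \<longleftrightarrow> list_adj L x y)"
  have key: "E (L!i) (L!j) \<longleftrightarrow> (j = i + 1 \<or> i = j + 1)" if ij: "i < length L" "j < length L" for i j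
  proof -
    have "E (L!i) (L!j) \<longleftrightarrow> list_adj L (L!i) (L!j)"
      using a nth_mem[OF ij(1)] nth_mem[OF ij(2)] by blast
    then show ?thesis using list_adj_nth_iff[of L i j] a ij by simp
  qed
  from a have "L \<noteq> []" "distinct L" "set L \<subseteq> V" by auto
  then show "is_path V E L" unfolding is_path_def by (simp add: key)
qed

lemma Suc_mod_if: "i < n \<Longrightarrow> Suc i mod n = (if Suc i = n then 0 else Suc i)"
  by (cases "Suc i = n") simp_all

lemma is_holeI:
  assumes len: "length C \<ge> 4" and d: "distinct C" and sv: "set C \<subseteq> V"
    and e: "\<forall>x\<in>set C. \<forall>y\<in>set C. E x y \<longleftrightarrow> list_adj C x y \<or> (x = hd C \<and> y = last C) \<or> (x = last C \<and> y = hd C)"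
  shows "is_hole V E C"
proof -
  let ?n = "length C"
  have cne: "C \<noteq> []" using len by auto
  have hd: "hd C = C!0" using cne by (simp add: hd_conv_nth)
  have lst: "last C = C!(?n - 1)" using cne by (simp add: last_conv_nth)
  have key: "E (C!i) (C!j) \<longleftrightarrow> (j = Suc i mod ?n \<or> i = Suc j mod ?n)" if ij: "i < ?n" "j < ?n" for i j
  proof -
    have n0: "0 < ?n" "?n - 1 < ?n" using len by auto
    have a1: "list_adj C (C!i) (C!j) \<longleftrightarrow> (j = i + 1 \<or> i = j + 1)"
      by (rule list_adj_nth_iff[OF d ij])
    have a2: "(C!i = hd C \<and> C!j = last C) \<longleftrightarrow> (i = 0 \<and> j = ?n - 1)"
      unfolding hd lst using nth_eq_iff_index_eq[OF d ij(1) n0(1)] nth_eq_iff_index_eq[OF d ij(2) n0(2)] by simp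
    have a3: "(C!i = last C \<and> C!j = hd C) \<longleftrightarrow> (j = 0 \<and> i = ?n - 1)"
      unfolding hd lst using nth_eq_iff_index_eq[OF d ij(2) n0(1)] nth_eq_iff_index_eq[OF d ij(1) n0(2)] by (simp add: conj_commute)
    have a4: "(j = Suc i mod ?n \<or> i = Suc j mod ?n) \<longleftrightarrow>
        (j = i + 1 \<or> i = j + 1 \<or> (i = 0 \<and> j = ?n - 1) \<or> (j = 0 \<and> i = ?n - 1))"
      unfolding Suc_mod_if[OF ij(1)] Suc_mod_if[OF ij(2)] using ij len by auto
    have "E (C!i) (C!j) \<longleftrightarrow> list_adj C (C!i) (C!j) \<or> (C!i = hd C \<and> C!j = last C) \<or> (C!i = last C \<and> C!j = hd C)"
      by (rule e[rule_format, OF nth_mem[OF ij(1)] nth_mem[OF ij(2)]])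
    then show ?thesis unfolding a1 a2 a3 a4 by (simp only: disj_assoc)
  qed
  show ?thesis using len d sv unfolding is_hole_def by (simp add: key)
qed

lemma graph_sym: "graph V E \<Longrightarrow> E x y \<Longrightarrow> E y x"
  unfolding graph_def by blast

lemma graph_irrefl: "graph V E \<Longrightarrow> \<not> E x x"
  unfolding graph_def by blast

lemma is_hole_append:
  assumes g: "graph V E" and p1: "is_path V E L1" and p2: "is_path V E L2"
    and dj: "set L1 \<inter> set L2 = {}"
    and e1: "E (last L1) (hd L2)" and e2: "E (last L2) (hd L1)"
    and cr: "\<forall>x\<in>set L1. \<forall>y\<in>set L2. E x y \<longrightarrow> (x = last L1 \<and> y = hd L2) \<or> (x = hd L1 \<and> y = last L2)"
    and len: "length L1 + length L2 \<ge> 4"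
  shows "is_hole V E (L1 @ L2)"
proof (rule is_holeI)
  from p1 have n1: "L1 \<noteq> []" and d1: "distinct L1" and s1: "set L1 \<subseteq> V"
    and a1: "\<forall>x\<in>set L1. \<forall>y\<in>set L1. E x y \<longleftrightarrow> list_adj L1 x y" by (auto simp: is_path_iff_list_adj)
  from p2 have n2: "L2 \<noteq> []" and d2: "distinct L2" and s2: "set L2 \<subseteq> V"
    and a2: "\<forall>x\<in>set L2. \<forall>y\<in>set L2. E x y \<longleftrightarrow> list_adj L2 x y" by (auto simp: is_path_iff_list_adj)
  show "4 \<le> length (L1 @ L2)" using len by simp
  show "distinct (L1 @ L2)" using d1 d2 dj by simp
  show "set (L1 @ L2) \<subseteq> V" using s1 s2 by simp
  have h1: "hd L1 \<in> set L1" "last L1 \<in> set L1" using n1 by auto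
  have h2: "hd L2 \<in> set L2" "last L2 \<in> set L2" using n2 by auto
  have hd: "hd (L1 @ L2) = hd L1" using n1 by simp
  have lst: "last (L1 @ L2) = last L2" using n2 by simp
  have ls1: "list_adj L1 x y \<Longrightarrow> x \<in> set L1 \<and> y \<in> set L1" for x y by (rule list_adj_in_set)
  have ls2: "list_adj L2 x y \<Longrightarrow> x \<in> set L2 \<and> y \<in> set L2" for x y by (rule list_adj_in_set)
  have c: "E x y \<longleftrightarrow> list_adj (L1 @ L2) x y \<or> (x = hd L1 \<and> y = last L2) \<or> (x = last L2 \<and> y = hd L1)"
    if xy: "x \<in> set L1 \<union> set L2" "y \<in> set L1 \<union> set L2" for x y
  proof -
    have la: "list_adj (L1 @ L2) x y \<longleftrightarrow> list_adj L1 x y \<or> list_adj L2 x y \<or>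
        ((last L1 = x \<and> hd L2 = y) \<or> (last L1 = y \<and> hd L2 = x))"
      using n1 n2 by (simp add: list_adj_append)
    consider "x \<in> set L1" "y \<in> set L1" | "x \<in> set L1" "y \<in> set L2" | "x \<in> set L2" "y \<in> set L1" | "x \<in> set L2" "y \<in> set L2"
      using xy by blast
    then show ?thesis
    proof cases
      case 1
      then have "y \<notin> set L2" "x \<notin> set L2" using dj by blast+
      then show ?thesis using 1 a1 la ls2 h2 by auto
    next
      case 2
      then have "y \<notin> set L1" "x \<notin> set L2" using dj by blast+
      then show ?thesis using 2 cr la ls1 ls2 e1 e2 g graph_sym by metis
    next
      case 3
      then have "y \<notin> set L2" "x \<notin> set L1" using dj by blast+
      have "E x y \<longleftrightarrow> E y x" using g graph_sym by metis
      then show ?thesis using 3 \<open>y \<notin> set L2\<close> \<open>x \<notin> set L1\<close> cr la ls1 ls2 e1 e2 by metis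
    next
      case 4
      then have "y \<notin> set L1" "x \<notin> set L1" using dj by blast+
      then show ?thesis using 4 a2 la ls1 h1 by auto
    qed
  qed
  show "\<forall>x\<in>set (L1 @ L2). \<forall>y\<in>set (L1 @ L2). E x y \<longleftrightarrow> list_adj (L1 @ L2) x y \<or>
          (x = hd (L1 @ L2) \<and> y = last (L1 @ L2)) \<or> (x = last (L1 @ L2) \<and> y = hd (L1 @ L2))"
    unfolding hd lst using c by simp
qed

lemma is_path_singleton: "graph V E \<Longrightarrow> x \<in> V \<Longrightarrow> is_path V E [x]"
  by (simp add: is_path_iff_list_adj graph_irrefl)

lemma is_path_rev: "is_path V E L \<Longrightarrow> is_path V E (rev L)"
  by (simp add: is_path_iff_list_adj)

lemma is_path_append:
  assumes g: "graph V E" and p1: "is_path V E L1" and p2: "is_path V E L2"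
    and dj: "set L1 \<inter> set L2 = {}"
    and e1: "E (last L1) (hd L2)"
    and cr: "\<forall>x\<in>set L1. \<forall>y\<in>set L2. E x y \<longrightarrow> x = last L1 \<and> y = hd L2"
  shows "is_path V E (L1 @ L2)"
proof -
  from p1 have n1: "L1 \<noteq> []" and d1: "distinct L1" and s1: "set L1 \<subseteq> V"
    and a1: "\<forall>x\<in>set L1. \<forall>y\<in>set L1. E x y \<longleftrightarrow> list_adj L1 x y" by (auto simp: is_path_iff_list_adj)
  from p2 have n2: "L2 \<noteq> []" and d2: "distinct L2" and s2: "set L2 \<subseteq> V"
    and a2: "\<forall>x\<in>set L2. \<forall>y\<in>set L2. E x y \<longleftrightarrow> list_adj L2 x y" by (auto simp: is_path_iff_list_adj)
  have h1: "hd L1 \<in> set L1" "last L1 \<in> set L1" using n1 by auto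
  have h2: "hd L2 \<in> set L2" "last L2 \<in> set L2" using n2 by auto
  have ls1: "list_adj L1 x y \<Longrightarrow> x \<in> set L1 \<and> y \<in> set L1" for x y by (rule list_adj_in_set)
  have ls2: "list_adj L2 x y \<Longrightarrow> x \<in> set L2 \<and> y \<in> set L2" for x y by (rule list_adj_in_set)
  have c: "E x y \<longleftrightarrow> list_adj (L1 @ L2) x y"
    if xy: "x \<in> set L1 \<union> set L2" "y \<in> set L1 \<union> set L2" for x y
  proof -
    have la: "list_adj (L1 @ L2) x y \<longleftrightarrow> list_adj L1 x y \<or> list_adj L2 x y \<or>
        ((last L1 = x \<and> hd L2 = y) \<or> (last L1 = y \<and> hd L2 = x))"
      using n1 n2 by (simp add: list_adj_append)
    consider "x \<in> set L1" "y \<in> set L1" | "x \<in> set L1" "y \<in> set L2" | "x \<in> set L2" "y \<in> set L1" | "x \<in> set L2" "y \<in> set L2"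
      using xy by blast
    then show ?thesis
    proof cases
      case 1
      then have "y \<notin> set L2" "x \<notin> set L2" using dj by blast+
      then show ?thesis using 1 a1 la ls2 h2 by auto
    next
      case 2
      then have "y \<notin> set L1" "x \<notin> set L2" using dj by blast+
      moreover have "last L1 \<noteq> y" "hd L2 \<noteq> x" using h1 h2 2 dj by blast+
      ultimately show ?thesis using 2 cr la ls1 ls2 e1 by blast
    next
      case 3
      then have "y \<notin> set L2" "x \<notin> set L1" using dj by blast+
      moreover have "last L1 \<noteq> x" "hd L2 \<noteq> y" using h1 h2 3 dj by blast+
      moreover have "E x y \<longleftrightarrow> E y x" using g graph_sym by metis
      ultimately show ?thesis using 3 cr la ls1 ls2 e1 by blast
    next
      case 4
      then have "y \<notin> set L1" "x \<notin> set L1" using dj by blast+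
      then show ?thesis using 4 a2 la ls1 h1 by auto
    qed
  qed
  show ?thesis unfolding is_path_iff_list_adj using n1 d1 d2 dj s1 s2 c by simp
qed

lemma is_path_infix:
  assumes p: "is_path V E (A @ B @ C)" and ne: "B \<noteq> []"
  shows "is_path V E B"
proof -
  let ?L = "A @ B @ C"
  from p have d: "distinct ?L" and s: "set ?L \<subseteq> V"
    and a: "\<forall>x\<in>set ?L. \<forall>y\<in>set ?L. E x y \<longleftrightarrow> list_adj ?L x y" by (auto simp: is_path_iff_list_adj)
  have c: "E x y \<longleftrightarrow> list_adj B x y" if xy: "x \<in> set B" "y \<in> set B" for x y
  proof -
    have nA: "x \<notin> set A" "y \<notin> set A" "x \<notin> set C" "y \<notin> set C" using d xy by auto
    have "list_adj ?L x y \<longleftrightarrow> list_adj B x y"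
    proof -
      have "list_adj (B @ C) x y \<longleftrightarrow> list_adj B x y"
        using nA ne list_adj_in_set[of C x y] by (auto simp: list_adj_append)
      moreover have "list_adj (A @ (B @ C)) x y \<longleftrightarrow> list_adj (B @ C) x y"
        using nA list_adj_in_set[of A x y] by (auto simp: list_adj_append)
      ultimately show ?thesis by simp
    qed
    then show ?thesis using a xy by simp
  qed
  show ?thesis unfolding is_path_iff_list_adj using ne d s c by auto
qed

lemma path_from_to_inner:
  assumes p: "path_from_to V E P a b" and nab: "\<not> E a b" and ab: "a \<noteq> b"
  shows "\<exists>M. P = a # M @ [b] \<and> M \<noteq> []"
proof -
  from p have ne: "P \<noteq> []" and hd: "hd P = a" and lst: "last P = b" and ip: "is_path V E P"
    by (auto simp: path_from_to_def is_path_def)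
  obtain T where T: "P = a # T" using ne hd by (cases P) auto
  have Tne: "T \<noteq> []" using T lst ab by auto
  obtain M where M: "T = M @ [b]" using Tne lst T by (metis append_butlast_last_id last_ConsR)
  have "M \<noteq> []"
  proof
    assume "M = []"
    then have "P = [a, b]" using T M by simp
    then have "list_adj P a b" by (simp add: list_adj_Cons)
    moreover have "a \<in> set P" "b \<in> set P" using \<open>P = [a,b]\<close> by auto
    ultimately show False using ip nab by (auto simp: is_path_iff_list_adj)
  qed
  then show ?thesis using T M by blast
qed

lemma is_path_Cons_adj:
  assumes "is_path V E (a # M)" "y \<in> set M"
  shows "E a y \<longleftrightarrow> y = hd M"
  using assms list_adj_in_set[of M a y] by (auto simp: is_path_iff_list_adj list_adj_Cons)

lemma is_path_snoc_adj:
  assumes "is_path V E (M @ [b])" "y \<in> set M"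
  shows "E b y \<longleftrightarrow> y = last M"
  using is_path_Cons_adj[of V E b "rev M" y] is_path_rev[OF assms(1)] assms(2)
  by (simp add: hd_rev)

lemma induces_hole_theta_paths:
  assumes g: "graph V E" and p1: "path_from_to V E P1 a b" and p2: "path_from_to V E P2 a b"
    and nab: "\<not> E a b" and ab: "a \<noteq> b" and i12: "set P1 \<inter> set P2 = {a, b}"
    and cr: "\<forall>x\<in>set P1 - {a, b}. \<forall>y\<in>set P2 - {a, b}. \<not> E x y"
  shows "induces_hole V E (set P1 \<union> set P2)"
proof -
  obtain M1 where M1: "P1 = a # M1 @ [b]" "M1 \<noteq> []" using path_from_to_inner[OF p1 nab ab] by blast
  obtain M where M: "P2 = a # M @ [b]" "M \<noteq> []" using path_from_to_inner[OF p2 nab ab] by blast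
  have ip1: "is_path V E P1" and ip2: "is_path V E (a # M @ [b])"
    using p1 p2 M by (auto simp: path_from_to_def)
  have pM: "is_path V E M" using is_path_infix[of V E "[a]" M "[b]"] ip2 M by simp
  have Ea: "y \<in> set M \<Longrightarrow> E a y \<longleftrightarrow> y = hd M" for y
    using is_path_infix[of V E "[]" "a # M" "[b]"] ip2 by (intro is_path_Cons_adj) simp_all
  have Eb: "y \<in> set M \<Longrightarrow> E b y \<longleftrightarrow> y = last M" for y
    using is_path_infix[of V E "[a]" "M @ [b]" "[]"] ip2 by (intro is_path_snoc_adj) simp_all
  have abM: "a \<notin> set M" "b \<notin> set M" using ip2 by (auto simp: is_path_def)
  have "is_hole V E (P1 @ rev M)"
  proof (rule is_hole_append[OF g ip1 is_path_rev[OF pM]])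
    show "set P1 \<inter> set (rev M) = {}" using i12 abM M by auto
    show "E (last P1) (hd (rev M))" "E (last (rev M)) (hd P1)"
      using Eb[of "last M"] Ea[of "hd M"] M M1 graph_sym[OF g] by (auto simp: hd_rev last_rev)
    show "\<forall>x\<in>set P1. \<forall>y\<in>set (rev M). E x y \<longrightarrow>
        (x = last P1 \<and> y = hd (rev M)) \<or> (x = hd P1 \<and> y = last (rev M))"
      using cr Ea Eb abM M M1 by (auto simp: hd_rev last_rev)
    show "4 \<le> length P1 + length (rev M)" using M M1 by (cases M1; cases M) auto
  qed
  moreover have "set (P1 @ rev M) = set P1 \<union> set P2" using M M1 by auto
  ultimately show ?thesis unfolding induces_hole_def by metis
qed

lemma has_thetaI:
  assumes g: "graph V E" and p1: "path_from_to V E P1 a b" and p2: "path_from_to V E P2 a b"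
    and p3: "path_from_to V E P3 a b"
    and nab: "\<not> E a b" and ab: "a \<noteq> b"
    and i12: "set P1 \<inter> set P2 = {a, b}" and i13: "set P1 \<inter> set P3 = {a, b}" and i23: "set P2 \<inter> set P3 = {a, b}"
    and c12: "\<forall>x\<in>set P1 - {a, b}. \<forall>y\<in>set P2 - {a, b}. \<not> E x y"
    and c13: "\<forall>x\<in>set P1 - {a, b}. \<forall>y\<in>set P3 - {a, b}. \<not> E x y"
    and c23: "\<forall>x\<in>set P2 - {a, b}. \<forall>y\<in>set P3 - {a, b}. \<not> E x y"
  shows "has_theta V E"
  unfolding has_theta_def
  using induces_hole_theta_paths[OF g p1 p2 nab ab i12 c12] induces_hole_theta_paths[OF g p1 p3 nab ab i13 c13]
    induces_hole_theta_paths[OF g p2 p3 nab ab i23 c23] assms by blast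

lemma induces_hole_pyramid_paths:
  assumes g: "graph V E" and p1: "path_from_to V E P1 a b1" and p2: "path_from_to V E P2 a b2"
    and e12: "E b1 b2" and ab1: "a \<noteq> b1" and ab2: "a \<noteq> b2" and i12: "set P1 \<inter> set P2 = {a}"
    and cr: "\<forall>x\<in>set P1 - {a}. \<forall>y\<in>set P2 - {a}. E x y \<longrightarrow> x = b1 \<and> y = b2"
    and len: "length P1 + length P2 \<ge> 5"
  shows "induces_hole V E (set P1 \<union> set P2)"
proof -
  have ip1: "is_path V E P1" and h1: "hd P1 = a" "last P1 = b1" and h2: "hd P2 = a" "last P2 = b2"
    using p1 p2 by (auto simp: path_from_to_def)
  obtain T where T: "P2 = a # T" using p2 h2 by (cases P2) (auto simp: path_from_to_def is_path_def)
  have Tne: "T \<noteq> []" and lT: "last T = b2" using T h2 ab2 by auto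
  have ip2: "is_path V E (a # T)" using p2 T by (simp add: path_from_to_def)
  have pT: "is_path V E T" using is_path_infix[of V E "[a]" T "[]"] ip2 Tne by simp
  have Ea: "y \<in> set T \<Longrightarrow> E a y \<longleftrightarrow> y = hd T" for y by (rule is_path_Cons_adj[OF ip2])
  have aT: "a \<notin> set T" using ip2 by (simp add: is_path_def)
  have "a \<in> set P1" using ip1 h1 by (metis hd_in_set is_path_def)
  have "is_hole V E (P1 @ rev T)"
  proof (rule is_hole_append[OF g ip1 is_path_rev[OF pT]])
    show "set P1 \<inter> set (rev T) = {}" using i12 aT T by auto
    show "E (last P1) (hd (rev T))" "E (last (rev T)) (hd P1)"
      using e12 Ea[of "hd T"] Tne lT h1 graph_sym[OF g] by (auto simp: hd_rev last_rev)
    show "\<forall>x\<in>set P1. \<forall>y\<in>set (rev T). E x y \<longrightarrow>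
        (x = last P1 \<and> y = hd (rev T)) \<or> (x = hd P1 \<and> y = last (rev T))"
      using cr Ea aT T h1 lT Tne by (auto simp: hd_rev last_rev)
    show "4 \<le> length P1 + length (rev T)" using len T by simp
  qed
  moreover have "set (P1 @ rev T) = set P1 \<union> set P2" using T \<open>a \<in> set P1\<close> by auto
  ultimately show ?thesis unfolding induces_hole_def by metis
qed

lemma has_pyramidI:
  assumes g: "graph V E" and t: "triangle E b1 b2 b3"
    and p1: "path_from_to V E P1 a b1" and p2: "path_from_to V E P2 a b2" and p3: "path_from_to V E P3 a b3"
    and ab: "a \<noteq> b1" "a \<noteq> b2" "a \<noteq> b3"
    and i12: "set P1 \<inter> set P2 = {a}" and i13: "set P1 \<inter> set P3 = {a}" and i23: "set P2 \<inter> set P3 = {a}"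
    and c12: "\<forall>x\<in>set P1 - {a}. \<forall>y\<in>set P2 - {a}. E x y \<longrightarrow> x = b1 \<and> y = b2"
    and c13: "\<forall>x\<in>set P1 - {a}. \<forall>y\<in>set P3 - {a}. E x y \<longrightarrow> x = b1 \<and> y = b3"
    and c23: "\<forall>x\<in>set P2 - {a}. \<forall>y\<in>set P3 - {a}. E x y \<longrightarrow> x = b2 \<and> y = b3"
    and l12: "length P1 + length P2 \<ge> 5" and l13: "length P1 + length P3 \<ge> 5" and l23: "length P2 + length P3 \<ge> 5"
  shows "has_pyramid V E"
proof -
  have e: "E b1 b2" "E b1 b3" "E b2 b3" using t by (auto simp: triangle_def)
  show ?thesis unfolding has_pyramid_def
    using induces_hole_pyramid_paths[OF g p1 p2 e(1) ab(1,2) i12 c12 l12] induces_hole_pyramid_paths[OF g p1 p3 e(2) ab(1,3) i13 c13 l13]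
      induces_hole_pyramid_paths[OF g p2 p3 e(3) ab(2,3) i23 c23 l23] t p1 p2 p3 i12 i13 i23 by blast
qed

lemma induces_hole_prism_paths:
  assumes g: "graph V E" and p1: "path_from_to V E P1 a1 b1" and p2: "path_from_to V E P2 a2 b2"
    and ea: "E a1 a2" and eb: "E b1 b2" and n1: "a1 \<noteq> b1" and n2: "a2 \<noteq> b2"
    and dj: "set P1 \<inter> set P2 = {}"
    and cr: "\<forall>x\<in>set P1. \<forall>y\<in>set P2. E x y \<longrightarrow> (x = a1 \<and> y = a2) \<or> (x = b1 \<and> y = b2)"
  shows "induces_hole V E (set P1 \<union> set P2)"
proof -
  have ip1: "is_path V E P1" and ip2: "is_path V E P2" and h1: "hd P1 = a1" "last P1 = b1"
    and h2: "hd P2 = a2" "last P2 = b2" using p1 p2 by (auto simp: path_from_to_def)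
  have ne: "P1 \<noteq> []" "P2 \<noteq> []" using ip1 ip2 by (auto simp: is_path_def)
  have l1: "length P1 \<ge> 2"
  proof -
    obtain z zs where zz: "P1 = z # zs" using ne by (cases P1) auto
    have "zs \<noteq> []" using zz h1 n1 by auto
    then show ?thesis using zz by (cases zs) auto
  qed
  have l2: "length P2 \<ge> 2"
  proof -
    obtain z zs where zz: "P2 = z # zs" using ne by (cases P2) auto
    have "zs \<noteq> []" using zz h2 n2 by auto
    then show ?thesis using zz by (cases zs) auto
  qed
  have hr: "hd (rev P2) = b2" "last (rev P2) = a2" using ne h2 by (auto simp: hd_rev last_rev)
  have e1: "E (last P1) (hd (rev P2))" using h1 hr eb by simp
  have e2: "E (last (rev P2)) (hd P1)" using h1 hr ea g graph_sym by metis
  have crs: "\<forall>x\<in>set P1. \<forall>y\<in>set (rev P2). E x y \<longrightarrow> (x = last P1 \<and> y = hd (rev P2)) \<or> (x = hd P1 \<and> y = last (rev P2))"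
    using cr h1 hr by auto
  have "is_hole V E (P1 @ rev P2)"
    by (rule is_hole_append[OF g ip1 is_path_rev[OF ip2]]) (use dj e1 e2 crs l1 l2 in auto)
  then show ?thesis unfolding induces_hole_def by (metis set_append set_rev)
qed

lemma has_prismI:
  assumes g: "graph V E" and ta: "triangle E a1 a2 a3" and tb: "triangle E b1 b2 b3"
    and p1: "path_from_to V E P1 a1 b1" and p2: "path_from_to V E P2 a2 b2" and p3: "path_from_to V E P3 a3 b3"
    and n: "a1 \<noteq> b1" "a2 \<noteq> b2" "a3 \<noteq> b3"
    and i12: "set P1 \<inter> set P2 = {}" and i13: "set P1 \<inter> set P3 = {}" and i23: "set P2 \<inter> set P3 = {}"
    and c12: "\<forall>x\<in>set P1. \<forall>y\<in>set P2. E x y \<longrightarrow> (x = a1 \<and> y = a2) \<or> (x = b1 \<and> y = b2)"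
    and c13: "\<forall>x\<in>set P1. \<forall>y\<in>set P3. E x y \<longrightarrow> (x = a1 \<and> y = a3) \<or> (x = b1 \<and> y = b3)"
    and c23: "\<forall>x\<in>set P2. \<forall>y\<in>set P3. E x y \<longrightarrow> (x = a2 \<and> y = a3) \<or> (x = b2 \<and> y = b3)"
  shows "has_prism V E"
proof -
  have ea: "E a1 a2" "E a1 a3" "E a2 a3" using ta by (auto simp: triangle_def)
  have eb: "E b1 b2" "E b1 b3" "E b2 b3" using tb by (auto simp: triangle_def)
  have mem: "a1 \<in> set P1" "b1 \<in> set P1" "a2 \<in> set P2" "b2 \<in> set P2" "a3 \<in> set P3" "b3 \<in> set P3"
    using p1 p2 p3 unfolding path_from_to_def is_path_def by auto
  have dab: "{a1, a2, a3} \<inter> {b1, b2, b3} = {}"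
    using n mem i12 i13 i23 by blast
  show ?thesis unfolding has_prism_def
    using induces_hole_prism_paths[OF g p1 p2 ea(1) eb(1) n(1,2) i12 c12] induces_hole_prism_paths[OF g p1 p3 ea(2) eb(2) n(1,3) i13 c13]
      induces_hole_prism_paths[OF g p2 p3 ea(3) eb(3) n(2,3) i23 c23] ta tb dab p1 p2 p3 i12 i13 i23 by blast
qed

section \<open>Cyclic enumerations of a hole\<close>

definition cyc_adj :: "nat \<Rightarrow> nat \<Rightarrow> nat \<Rightarrow> bool" where
  "cyc_adj n i j \<longleftrightarrow> j = Suc i \<or> i = Suc j \<or> (i = 0 \<and> j = n - 1) \<or> (j = 0 \<and> i = n - 1)"

definition hole_enum :: "'a set \<Rightarrow> ('a \<Rightarrow> 'a \<Rightarrow> bool) \<Rightarrow> nat \<Rightarrow> (nat \<Rightarrow> 'a) \<Rightarrow> bool" where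
  "hole_enum V E n h \<longleftrightarrow> 4 \<le> n \<and> inj_on h {..<n} \<and> h ` {..<n} \<subseteq> V \<and>
     (\<forall>i<n. \<forall>j<n. E (h i) (h j) \<longleftrightarrow> cyc_adj n i j)"

text \<open>Being major, for an enumerated hole.\<close>
definition cyc_major :: "('a \<Rightarrow> 'a \<Rightarrow> bool) \<Rightarrow> nat \<Rightarrow> (nat \<Rightarrow> 'a) \<Rightarrow> 'a \<Rightarrow> bool" where
  "cyc_major E n h z \<longleftrightarrow> (\<forall>c<n. \<exists>i<n. E z (h i) \<and> i \<noteq> c \<and> \<not> cyc_adj n i c)"

lemma hole_enum_nth:
  assumes "is_hole V E H"
  shows "hole_enum V E (length H) ((!) H)"
proof -
  let ?n = "length H"
  from assms have n: "4 \<le> ?n" and d: "distinct H" and s: "set H \<subseteq> V"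
    and e: "\<forall>i j. i < ?n \<longrightarrow> j < ?n \<longrightarrow> (E (H!i) (H!j) \<longleftrightarrow> (j = Suc i mod ?n \<or> i = Suc j mod ?n))"
    unfolding is_hole_def by blast+
  have "E (H!i) (H!j) \<longleftrightarrow> cyc_adj ?n i j" if "i < ?n" "j < ?n" for i j
  proof -
    have "(j = Suc i mod ?n \<or> i = Suc j mod ?n) \<longleftrightarrow> cyc_adj ?n i j"
      unfolding Suc_mod_if[OF that(1)] Suc_mod_if[OF that(2)] cyc_adj_def using that n by auto
    then show ?thesis using e that by simp
  qed
  then show ?thesis
    using n d s by (auto simp: hole_enum_def inj_on_def nth_eq_iff_index_eq)
qed

lemma hole_enum_reindex:
  assumes h: "hole_enum V E n h" and \<sigma>: "bij_betw \<sigma> {..<n} {..<n}"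
    and adj: "\<forall>i<n. \<forall>j<n. cyc_adj n (\<sigma> i) (\<sigma> j) \<longleftrightarrow> cyc_adj n i j"
  shows "hole_enum V E n (h \<circ> \<sigma>)" and "(h \<circ> \<sigma>) ` {..<n} = h ` {..<n}"
proof -
  show img: "(h \<circ> \<sigma>) ` {..<n} = h ` {..<n}"
    using \<sigma> by (metis bij_betw_def image_comp)
  have "inj_on (h \<circ> \<sigma>) {..<n}"
    using h \<sigma> by (auto simp: hole_enum_def bij_betw_def intro: comp_inj_on)
  moreover have "\<sigma> i < n" if "i < n" for i
    using \<sigma> that by (auto dest: bij_betwE)
  ultimately show "hole_enum V E n (h \<circ> \<sigma>)"
    using h adj img by (auto simp: hole_enum_def)
qed

lemma cyc_adj_automorphism:
  assumes n: "4 \<le> n" and st: "s < n" "t < n" "cyc_adj n s t"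
  obtains \<sigma> where "bij_betw \<sigma> {..<n} {..<n}"
    "\<forall>i<n. \<forall>j<n. cyc_adj n (\<sigma> i) (\<sigma> j) \<longleftrightarrow> cyc_adj n i j" "\<sigma> 0 = s" "\<sigma> 1 = t"
proof (cases "t = Suc s \<or> (t = 0 \<and> s = n - 1)")
  case True
  define \<sigma> where "\<sigma> k = (k + s) mod n" for k
  have md: "k < n \<Longrightarrow> \<sigma> k = (if k + s < n then k + s else k + s - n)" for k
    using st n by (auto simp: \<sigma>_def mod_if le_mod_geq)
  have "inj_on \<sigma> {..<n}"
    unfolding inj_on_def using md by (auto split: if_splits)
  moreover have "\<sigma> ` {..<n} \<subseteq> {..<n}"
    using n by (auto simp: \<sigma>_def)
  ultimately have "bij_betw \<sigma> {..<n} {..<n}"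
    by (simp add: bij_betw_def endo_inj_surj)
  moreover have "\<forall>i<n. \<forall>j<n. cyc_adj n (\<sigma> i) (\<sigma> j) \<longleftrightarrow> cyc_adj n i j"
    using md n st(1) unfolding cyc_adj_def by (auto split: if_splits)
  moreover have "\<sigma> 0 = s" "\<sigma> 1 = t"
    using True st n by (auto simp: \<sigma>_def)
  ultimately show ?thesis using that by blast
next
  case False
  then have ts: "s = Suc t \<or> (s = 0 \<and> t = n - 1)"
    using st(3) by (auto simp: cyc_adj_def)
  define \<sigma> where "\<sigma> k = (s + n - k) mod n" for k
  have md: "k < n \<Longrightarrow> \<sigma> k = (if k \<le> s then s - k else s + n - k)" for k
    using st n by (auto simp: \<sigma>_def mod_if le_mod_geq)
  have "inj_on \<sigma> {..<n}"
    unfolding inj_on_def using md by (auto split: if_splits)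
  moreover have "\<sigma> ` {..<n} \<subseteq> {..<n}"
    using n by (auto simp: \<sigma>_def)
  ultimately have "bij_betw \<sigma> {..<n} {..<n}"
    by (simp add: bij_betw_def endo_inj_surj)
  moreover have "\<forall>i<n. \<forall>j<n. cyc_adj n (\<sigma> i) (\<sigma> j) \<longleftrightarrow> cyc_adj n i j"
    using md n st(1) unfolding cyc_adj_def by (auto split: if_splits)
  moreover have "\<sigma> 0 = s" "\<sigma> 1 = t"
    using ts st n by (auto simp: \<sigma>_def)
  ultimately show ?thesis using that by blast
qed

lemma hole_enum_path_prefix:
  assumes h: "hole_enum V E n h" and p: "is_path V E P" and sp: "set P \<subseteq> h ` {..<n}"
    and l: "2 \<le> length P" and p0: "P!0 = h 0" and p1: "P!1 = h 1"
  shows "P = map h [0..<length P]"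
proof -
  from h have n: "4 \<le> n"
    and e: "\<forall>i<n. \<forall>j<n. E (h i) (h j) \<longleftrightarrow> cyc_adj n i j" unfolding hole_enum_def by blast+
  from p have d: "distinct P"
    and pe: "\<And>i j. i < length P \<Longrightarrow> j < length P \<Longrightarrow> E (P!i) (P!j) \<longleftrightarrow> (j = i + 1 \<or> i = j + 1)"
    unfolding is_path_def by blast+
  have lenP: "length P \<le> n"
  proof -
    have "card (set P) \<le> card (h ` {..<n})" using sp by (simp add: card_mono)
    also have "\<dots> \<le> n" using card_image_le[of "{..<n}" h] by simp
    finally show ?thesis using d by (simp add: distinct_card)
  qed
  have "P!j = h j" if "j < length P" for j
    using that
  proof (induction j rule: less_induct)
    case (less j)
    show ?case
    proof (cases "j \<le> 1")
      case True
      then show ?thesis using p0 p1 by (cases j) auto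
    next
      case False
      define k where "k = j - 2"
      have k: "j = Suc (Suc k)" using False by (simp add: k_def)
      have ih: "P!(Suc k) = h (Suc k)" "P!k = h k" using less k by simp_all
      obtain q where q: "q < n" "P!j = h q" using sp nth_mem[OF less.prems] by auto
      have "E (P!(Suc k)) (P!j)" using pe[of "Suc k" j] less.prems k by simp
      then have "cyc_adj n (Suc k) q" using e ih q lenP less.prems k by simp
      moreover have "q \<noteq> k"
      proof
        assume "q = k"
        then have "P!j = P!k" using q ih by simp
        then show False using nth_eq_iff_index_eq[OF d less.prems, of k] less.prems k by simp
      qed
      moreover have "q \<noteq> 0"
      proof
        assume "q = 0"
        then have "P!j = P!0" using q p0 by simp
        moreover have "0 < length P" using l by linarith
        ultimately show False using nth_eq_iff_index_eq[OF d less.prems, of 0] k by simp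
      qed
      ultimately have "q = j" unfolding cyc_adj_def using k lenP less.prems n by auto
      then show ?thesis using q by simp
    qed
  qed
  then show ?thesis by (intro nth_equalityI) simp_all
qed

text \<open>A path cannot run around the whole hole: its ends would be adjacent.\<close>
lemma hole_enum_path_length:
  assumes h: "hole_enum V E n h" and p: "is_path V E (map h [0..<k])" and k: "2 \<le> k"
  shows "k < n"
proof (rule ccontr)
  assume "\<not> k < n"
  moreover from h have "4 \<le> n" and "\<forall>i<n. \<forall>j<n. E (h i) (h j) \<longleftrightarrow> cyc_adj n i j"
    unfolding hole_enum_def by blast+
  ultimately have "E (map h [0..<k] ! 0) (map h [0..<k] ! (n - 1))"
    by (simp add: cyc_adj_def)
  moreover have "\<not> E (map h [0..<k] ! 0) (map h [0..<k] ! (n - 1))"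
    using p \<open>\<not> k < n\<close> \<open>4 \<le> n\<close> unfolding is_path_def by auto
  ultimately show False by simp
qed

lemma hole_path_as_arc:
  assumes hole: "is_hole V E H" and p: "is_path V E P" and pH: "set P \<subseteq> set H"
    and l: "2 \<le> length P"
  obtains h m where "hole_enum V E (length H) h" "h ` {..<length H} = set H"
    "P = map h [0..<Suc m]" "1 \<le> m" "m + 2 \<le> length H"
proof -
  let ?n = "length H"
  have H: "hole_enum V E ?n ((!) H)" by (rule hole_enum_nth[OF hole])
  then have n4: "4 \<le> ?n" by (simp add: hole_enum_def)
  have "0 < length P" "1 < length P" using l by linarith+
  then have "P!0 \<in> set P" "P!1 \<in> set P" by simp_all
  then have "P!0 \<in> set H" "P!1 \<in> set H" using pH by blast+
  then obtain s t where s: "s < ?n" "H!s = P!0" and t: "t < ?n" "H!t = P!1"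
    by (auto simp: in_set_conv_nth)
  have "E (P!0) (P!1)" using p l unfolding is_path_def by auto
  then have "cyc_adj ?n s t" using H s t unfolding hole_enum_def by metis
  then obtain \<sigma> where \<sigma>: "bij_betw \<sigma> {..<?n} {..<?n}"
    "\<forall>i<?n. \<forall>j<?n. cyc_adj ?n (\<sigma> i) (\<sigma> j) \<longleftrightarrow> cyc_adj ?n i j" "\<sigma> 0 = s" "\<sigma> 1 = t"
    using cyc_adj_automorphism[OF n4 s(1) t(1)] by blast
  define h where "h = (!) H \<circ> \<sigma>"
  have "(!) H ` {..<?n} = set H" by (auto simp: in_set_conv_nth)
  then have h: "hole_enum V E ?n h" and img: "h ` {..<?n} = set H"
    using hole_enum_reindex[OF H \<sigma>(1,2)] unfolding h_def by simp_all
  have "P!0 = h 0" "P!1 = h 1" using s t \<sigma>(3,4) by (simp_all add: h_def)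
  then have P: "P = map h [0..<length P]"
    using hole_enum_path_prefix[OF h p _ l] pH img by blast
  define m where "m = length P - 1"
  have lP: "length P = Suc m" using l by (simp add: m_def)
  have "is_path V E (map h [0..<length P])" by (subst P[symmetric]) (rule p)
  then have "length P < ?n" by (rule hole_enum_path_length[OF h _ l])
  then have "1 \<le> m" "m + 2 \<le> ?n" using lP l by linarith+
  then show ?thesis using that h img P[unfolded lP] by blast
qed

lemma major_imp_cyc_major:
  assumes z: "major V E H z" and h: "hole_enum V E n h" and img: "h ` {..<n} = set H"
  shows "cyc_major E n h z"
  unfolding cyc_major_def
proof (rule ccontr)
  assume "\<not> (\<forall>c<n. \<exists>i<n. E z (h i) \<and> i \<noteq> c \<and> \<not> cyc_adj n i c)"
  then obtain c where c: "c < n" and near: "\<forall>i<n. E z (h i) \<longrightarrow> i = c \<or> cyc_adj n i c" by blast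
  from h have n: "4 \<le> n" and hi: "inj_on h {..<n}" and hV: "h ` {..<n} \<subseteq> V"
    and e: "\<forall>i<n. \<forall>j<n. E (h i) (h j) \<longleftrightarrow> cyc_adj n i j" unfolding hole_enum_def by blast+
  define p where "p = (if c = 0 then n - 1 else c - 1)"
  define q where "q = (if c = n - 1 then 0 else c + 1)"
  have pq: "p < n" "q < n" "p \<noteq> c" "q \<noteq> c" "p \<noteq> q" using c n unfolding p_def q_def by auto
  have cad: "cyc_adj n p c" "cyc_adj n c p" "cyc_adj n c q" "cyc_adj n q c"
    "\<not> cyc_adj n p q" "\<not> cyc_adj n q p" "\<And>a. \<not> cyc_adj n a a"
    using c n unfolding p_def q_def cyc_adj_def by auto
  have near': "i = p \<or> i = q" if "i < n" "cyc_adj n i c" for i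
    using c n that unfolding p_def q_def cyc_adj_def by auto
  have hne: "h p \<noteq> h c" "h c \<noteq> h q" "h p \<noteq> h q"
    using hi pq c by (auto dest: inj_onD)
  have adj: "E (h p) (h c)" "E (h c) (h p)" "E (h c) (h q)" "E (h q) (h c)"
    "\<not> E (h p) (h q)" "\<not> E (h q) (h p)" "\<And>a. a < n \<Longrightarrow> \<not> E (h a) (h a)"
    using e cad pq c by simp_all
  define Q where "Q = [h p, h c, h q]"
  have "is_path V E Q"
    unfolding is_path_iff_list_adj Q_def using pq c hV hne adj
    by (auto simp: list_adj_Cons)
  then have "subpath_of_hole V E H Q"
    unfolding subpath_of_hole_def using img pq c Q_def by auto
  moreover have "nbrs_in E z (set H) \<subseteq> set Q"
  proof
    fix x assume "x \<in> nbrs_in E z (set H)"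
    then have "x \<in> h ` {..<n}" "E z x" using img by (auto simp: nbrs_in_def)
    then obtain i where "i < n" "x = h i" "E z (h i)" by blast
    then show "x \<in> set Q" using near near' by (auto simp: Q_def)
  qed
  moreover have "z \<in> V" "z \<notin> set H" "nbrs_in E z (set H) \<noteq> {}"
    using z by (simp_all add: major_def)
  moreover have "length Q = 3" by (simp add: Q_def)
  ultimately have "minor V E H z" unfolding minor_def by blast
  then show False using z by (simp add: major_def)
qed

definition sector_nbrs :: "('a \<Rightarrow> 'a \<Rightarrow> bool) \<Rightarrow> (nat \<Rightarrow> 'a) \<Rightarrow> nat \<Rightarrow> 'a \<Rightarrow> nat set" where
  "sector_nbrs E h m z = {i. i \<le> m \<and> E z (h i)}"

definition rest_nbrs :: "('a \<Rightarrow> 'a \<Rightarrow> bool) \<Rightarrow> nat \<Rightarrow> (nat \<Rightarrow> 'a) \<Rightarrow> nat \<Rightarrow> 'a \<Rightarrow> nat set" where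
  "rest_nbrs E n h m z = {j. m < j \<and> j < n \<and> E z (h j)}"

lemma mem_sector_nbrs [simp]: "i \<in> sector_nbrs E h m z \<longleftrightarrow> i \<le> m \<and> E z (h i)"
  by (simp add: sector_nbrs_def)

lemma mem_rest_nbrs [simp]: "j \<in> rest_nbrs E n h m z \<longleftrightarrow> m < j \<and> j < n \<and> E z (h j)"
  by (simp add: rest_nbrs_def)

text \<open>The reflection of the cycle \<open>0, \<dots>, n - 1\<close> that swaps the ends of the arc \<open>0, \<dots>, m\<close>.\<close>
definition mirror :: "nat \<Rightarrow> nat \<Rightarrow> nat \<Rightarrow> nat" where
  "mirror n m k = (if k \<le> m then m - k else m + n - k)"

lemma mirror_sector [simp]: "i \<le> m \<Longrightarrow> mirror n m i = m - i"
  and mirror_rest [simp]: "m < j \<Longrightarrow> mirror n m j = m + n - j"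
  by (simp_all add: mirror_def)

text \<open>The hole is \<open>h 0, \<dots>, h (n - 1)\<close>, its subpath \<open>P = h 0, \<dots>, h m\<close> is the \<open>u\<close>-sector
  and \<open>R = h (m + 1), \<dots>, h (n - 1)\<close> is the rest of the hole; \<open>nbrs_P z\<close> and \<open>nbrs_R z\<close>
  are the positions of the neighbours of \<open>z\<close> on \<open>P\<close> and on \<open>R\<close>.\<close>
locale sector_setting =
  fixes V :: "'a set" and E :: "'a \<Rightarrow> 'a \<Rightarrow> bool" and n :: nat and h :: "nat \<Rightarrow> 'a"
    and m :: nat and u :: 'a and v :: 'a
  assumes graph: "graph V E" and class_C: "in_class_C V E" and hole: "hole_enum V E n h"
    and m_ge: "2 \<le> m" and m_le: "m + 2 \<le> n"
    and u_V: "u \<in> V" and v_V: "v \<in> V" and u_off: "u \<notin> h ` {..<n}" and v_off: "v \<notin> h ` {..<n}"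
    and u_ne_v: "u \<noteq> v" and uv_nonadj: "\<not> E u v"
    and u_sector: "sector_nbrs E h m u = {0, m}"
    and u_major: "cyc_major E n h u" and v_major: "cyc_major E n h v"
begin

abbreviation nbrs_P :: "'a \<Rightarrow> nat set" where
  "nbrs_P \<equiv> sector_nbrs E h m"

abbreviation nbrs_R :: "'a \<Rightarrow> nat set" where
  "nbrs_R \<equiv> rest_nbrs E n h m"

lemma n_ge: "4 \<le> n"
  using hole by (simp add: hole_enum_def)

lemmas sizes = n_ge m_ge m_le

lemma h_inj [simp]: "i < n \<Longrightarrow> j < n \<Longrightarrow> h i = h j \<longleftrightarrow> i = j"
  using hole by (auto simp: hole_enum_def inj_on_def)

lemma h_V: "i < n \<Longrightarrow> h i \<in> V"
  using hole by (auto simp: hole_enum_def)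

lemma h_ne [simp]: "i < n \<Longrightarrow> h i \<noteq> u" "i < n \<Longrightarrow> u \<noteq> h i"
  "i < n \<Longrightarrow> h i \<noteq> v" "i < n \<Longrightarrow> v \<noteq> h i"
  using u_off v_off by auto

lemma E_commute: "E x y \<longleftrightarrow> E y x"
  using graph graph_sym by metis

lemma E_irrefl [simp]: "\<not> E x x"
  using graph graph_irrefl by metis

lemma E_h_iff [simp]: "i < n \<Longrightarrow> j < n \<Longrightarrow>
    E (h i) (h j) \<longleftrightarrow> j = Suc i \<or> i = Suc j \<or> (i = 0 \<and> j = n - 1) \<or> (j = 0 \<and> i = n - 1)"
  using hole by (simp add: hole_enum_def cyc_adj_def)

lemma E_uv_simps [simp]: "E (h i) u \<longleftrightarrow> E u (h i)" "E (h i) v \<longleftrightarrow> E v (h i)"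
  "\<not> E u v" "\<not> E v u" "u \<noteq> v" "v \<noteq> u"
  using E_commute uv_nonadj u_ne_v by blast+

lemma u_sector_iff: "i \<le> m \<Longrightarrow> E u (h i) \<longleftrightarrow> i = 0 \<or> i = m"
  using u_sector by (auto simp: set_eq_iff)

lemma not_theta: "\<not> has_theta V E" and not_pyramid: "\<not> has_pyramid V E"
  and not_prism: "\<not> has_prism V E"
  using class_C by (auto simp: in_class_C_def)

lemma nbrs_P_eqD: "nbrs_P z = A \<Longrightarrow> i \<le> m \<Longrightarrow> E z (h i) \<longleftrightarrow> i \<in> A"
  by auto

lemma nbrs_P_Int_eqD: "nbrs_P z \<inter> I = A \<Longrightarrow> i \<le> m \<Longrightarrow> i \<in> I \<Longrightarrow> E z (h i) \<longleftrightarrow> i \<in> A"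
  by auto

lemma nbrs_R_eqD: "nbrs_R z = A \<Longrightarrow> m < j \<Longrightarrow> j < n \<Longrightarrow> E z (h j) \<longleftrightarrow> j \<in> A"
  by auto

lemma nbrs_R_Int_eqD: "nbrs_R z \<inter> I = A \<Longrightarrow> m < j \<Longrightarrow> j < n \<Longrightarrow> j \<in> I \<Longrightarrow> E z (h j) \<longleftrightarrow> j \<in> A"
  by auto

lemma not_near:
  assumes "z \<in> {u, v}" "c < n" "\<forall>i<n. E z (h i) \<longrightarrow> i = c \<or> cyc_adj n i c"
  shows False
  using assms u_major v_major by (auto simp: cyc_major_def)

definition seg :: "nat \<Rightarrow> nat \<Rightarrow> 'a list" where
  "seg i j = map h [i..<Suc j]"

lemma set_seg [simp]: "set (seg i j) = h ` {i..j}"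
  by (auto simp: seg_def)

lemma seg_ne [simp]: "i \<le> j \<Longrightarrow> seg i j \<noteq> []"
  by (simp add: seg_def)

lemma hd_seg [simp]: "i \<le> j \<Longrightarrow> hd (seg i j) = h i"
  by (simp add: seg_def hd_map upt_rec)

lemma last_seg [simp]: "i \<le> j \<Longrightarrow> last (seg i j) = h j"
  by (simp add: seg_def last_map)

lemma length_seg [simp]: "length (seg i j) = Suc j - i"
  by (simp add: seg_def del: upt_Suc)

lemma is_path_seg:
  assumes "i \<le> j" "j < n" "\<not> (i = 0 \<and> j = n - 1)"
  shows "is_path V E (seg i j)"
proof -
  have nth: "a < Suc j - i \<Longrightarrow> seg i j ! a = h (i + a)" for a
    by (simp add: seg_def del: upt_Suc)
  have "distinct (seg i j)"
    unfolding seg_def using assms by (simp add: distinct_map inj_on_def del: upt_Suc)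
  moreover have "set (seg i j) \<subseteq> V" using assms h_V by auto
  moreover have "E (seg i j ! a) (seg i j ! b) \<longleftrightarrow> (b = a + 1 \<or> a = b + 1)"
    if "a < length (seg i j)" "b < length (seg i j)" for a b
    using that assms nth by (auto simp: seg_def simp del: upt_Suc)
  ultimately show ?thesis unfolding is_path_def using assms by simp
qed

lemmas path_intros = is_path_append[OF graph] is_path_singleton[OF graph h_V]
  is_path_singleton[OF graph u_V] is_path_singleton[OF graph v_V] is_path_seg is_path_rev

lemma mirror_lt: "k < n \<Longrightarrow> mirror n m k < n"
  using m_le by (auto simp: mirror_def)

lemma mirror_mirror: "k < n \<Longrightarrow> mirror n m (mirror n m k) = k"
  using m_le by (auto simp: mirror_def)

lemma cyc_adj_mirror: "i < n \<Longrightarrow> j < n \<Longrightarrow> cyc_adj n (mirror n m i) (mirror n m j) \<longleftrightarrow> cyc_adj n i j"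
  using m_le unfolding mirror_def cyc_adj_def by (auto split: if_splits)

lemma bij_mirror: "bij_betw (mirror n m) {..<n} {..<n}"
  by (rule bij_betw_byWitness[where f' = "mirror n m"]) (auto simp: mirror_mirror mirror_lt)

lemma cyc_major_mirror:
  assumes "cyc_major E n h z"
  shows "cyc_major E n (h \<circ> mirror n m) z"
  unfolding cyc_major_def
proof (intro allI impI)
  fix c assume c: "c < n"
  obtain i where i: "i < n" "E z (h i)" "i \<noteq> mirror n m c" "\<not> cyc_adj n i (mirror n m c)"
    using assms mirror_lt[OF c] by (auto simp: cyc_major_def)
  have "mirror n m i \<noteq> c" using i(3) mirror_mirror[OF i(1)] by auto
  moreover have "\<not> cyc_adj n (mirror n m i) c"
    using cyc_adj_mirror[OF mirror_lt[OF i(1)] c] mirror_mirror[OF i(1)] i(4) by simp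
  ultimately show "\<exists>i<n. E z ((h \<circ> mirror n m) i) \<and> i \<noteq> c \<and> \<not> cyc_adj n i c"
    using i(1,2) mirror_lt[OF i(1)] mirror_mirror[OF i(1)] by (metis comp_apply)
qed

lemma mirror_nbrs_P: "sector_nbrs E (h \<circ> mirror n m) m z = (\<lambda>i. m - i) ` nbrs_P z"
proof (intro set_eqI iffI)
  fix i assume "i \<in> sector_nbrs E (h \<circ> mirror n m) m z"
  then show "i \<in> (\<lambda>i. m - i) ` nbrs_P z" by (intro image_eqI[of _ _ "m - i"]) auto
qed auto

lemma mirror_nbrs_R: "rest_nbrs E n (h \<circ> mirror n m) m z = (\<lambda>j. m + n - j) ` nbrs_R z"
proof (intro set_eqI iffI)
  fix j assume "j \<in> rest_nbrs E n (h \<circ> mirror n m) m z"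
  then show "j \<in> (\<lambda>j. m + n - j) ` nbrs_R z" by (intro image_eqI[of _ _ "m + n - j"]) auto
qed auto

lemma mirror_setting: "sector_setting V E n (h \<circ> mirror n m) m u v"
proof -
  have adj: "\<forall>i<n. \<forall>j<n. cyc_adj n (mirror n m i) (mirror n m j) \<longleftrightarrow> cyc_adj n i j"
    using cyc_adj_mirror by blast
  note reindex = hole_enum_reindex[OF hole bij_mirror adj]
  have "sector_nbrs E (h \<circ> mirror n m) m u = {0, m}"
    by (simp add: mirror_nbrs_P u_sector insert_commute)
  then show ?thesis
    using graph class_C sizes u_V v_V u_off v_off u_ne_v uv_nonadj reindex
      cyc_major_mirror[OF u_major] cyc_major_mirror[OF v_major]
    by unfold_locales simp_all
qed

lemma mirror_nbrs_R_last:
  assumes "nbrs_R z \<inter> {t..} = {t}"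
  shows "rest_nbrs E n (h \<circ> mirror n m) m z \<inter> {..m + n - t} = {m + n - t}"
proof -
  have t: "m < t" "t < n" using assms by auto
  show ?thesis
  proof (intro set_eqI iffI)
    fix j assume "j \<in> rest_nbrs E n (h \<circ> mirror n m) m z \<inter> {..m + n - t}"
    then have "m + n - j \<in> nbrs_R z \<inter> {t..}" using t by auto
    then show "j \<in> {m + n - t}" using assms t by auto
  next
    fix j assume "j \<in> {m + n - t}"
    moreover have "t \<in> nbrs_R z" using assms by blast
    ultimately show "j \<in> rest_nbrs E n (h \<circ> mirror n m) m z \<inter> {..m + n - t}" using t by auto
  qed
qed

lemma mirror_mem_nbrs_R:
  "m < j \<Longrightarrow> j < n \<Longrightarrow> m + n - j \<in> rest_nbrs E n (h \<circ> mirror n m) m z \<longleftrightarrow> j \<in> nbrs_R z"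
  by auto

lemma mirror_nbrs_R_Int_interval:
  assumes "m < b" "a < n" "nbrs_R z \<inter> {b..a} = {c}"
  shows "rest_nbrs E n (h \<circ> mirror n m) m z \<inter> {m + n - a..m + n - b} = {m + n - c}"
proof (intro set_eqI iffI)
  fix j assume "j \<in> rest_nbrs E n (h \<circ> mirror n m) m z \<inter> {m + n - a..m + n - b}"
  then have "m + n - j \<in> nbrs_R z \<inter> {b..a}" using assms(1,2) by auto
  then show "j \<in> {m + n - c}" using assms by auto
next
  fix j assume "j \<in> {m + n - c}"
  moreover have "c \<in> nbrs_R z \<inter> {b..a}" using assms(3) by blast
  ultimately show "j \<in> rest_nbrs E n (h \<circ> mirror n m) m z \<inter> {m + n - a..m + n - b}"
    by auto
qed

lemma mirror_ends [simp]: "m + n - Suc m = n - Suc 0" "m + n - (n - Suc 0) = Suc m"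
  using sizes by auto

lemma nbrs_R_subset_of_mirror:
  assumes "rest_nbrs E n (h \<circ> mirror n m) m z \<subseteq> {m + 1}"
  shows "nbrs_R z \<subseteq> {n - 1}"
proof
  fix j assume j: "j \<in> nbrs_R z"
  then have "m + n - j \<in> rest_nbrs E n (h \<circ> mirror n m) m z" using mirror_mem_nbrs_R by auto
  then have "m + n - j = m + 1" using assms by blast
  then show "j \<in> {n - 1}" using j by auto
qed

lemma finite_nbrs_R: "finite (nbrs_R z)"
  by (rule finite_subset[of _ "{..<n}"]) auto

subsection \<open>Forbidden configurations\<close>

lemma nbrs_R_u_nonempty: "nbrs_R u \<noteq> {}"
proof
  assume "nbrs_R u = {}"
  then have nR: "m < i \<Longrightarrow> i < n \<Longrightarrow> \<not> E u (h i)" for i by auto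
  define P1 where "P1 = [h 0, u, h m]"
  define P2 where "P2 = seg 0 m"
  define P3 where "P3 = [h 0] @ rev (seg m (n - 1))"
  have p1: "path_from_to V E P1 (h 0) (h m)"
    unfolding path_from_to_def is_path_iff_list_adj P1_def
    using sizes u_V h_V u_sector_iff[of 0] u_sector_iff[of m] by (auto simp: list_adj_Cons)
  have p2: "path_from_to V E P2 (h 0) (h m)"
    unfolding path_from_to_def P2_def using sizes by (auto intro!: is_path_seg)
  have p3: "path_from_to V E P3 (h 0) (h m)"
    unfolding path_from_to_def P3_def
    by (intro conjI path_intros) (use sizes in \<open>auto simp: hd_rev last_rev\<close>)
  have "has_theta V E"
    by (rule has_thetaI[OF graph p1 p2 p3])
      (use sizes nR u_sector_iff in \<open>auto simp: P1_def P2_def P3_def\<close>)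
  then show False using not_theta by simp
qed

lemma theta_of_sector_gap:
  assumes xy: "x + 2 \<le> y" "y \<le> m" and vP: "nbrs_P v = {x, y}"
  shows "has_theta V E"
proof -
  note vP = nbrs_P_eqD[OF vP, simplified]
  define P1 where "P1 = [h x, v, h y]"
  define P2 where "P2 = seg x y"
  define P3 where "P3 = rev (seg 0 x) @ [u] @ rev (seg y m)"
  have p1: "path_from_to V E P1 (h x) (h y)"
    unfolding path_from_to_def is_path_iff_list_adj P1_def
    using sizes xy v_V h_V by (auto simp: list_adj_Cons vP)
  have p2: "path_from_to V E P2 (h x) (h y)"
    unfolding path_from_to_def P2_def using sizes xy by (auto intro!: is_path_seg)
  have p3: "path_from_to V E P3 (h x) (h y)"
    unfolding path_from_to_def P3_def
    by (intro conjI path_intros) (use sizes xy in \<open>auto simp: u_sector_iff hd_rev last_rev\<close>)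
  show ?thesis
    by (rule has_thetaI[OF graph p1 p2 p3])
      (use sizes xy in \<open>auto simp: P1_def P2_def P3_def vP u_sector_iff\<close>)
qed

lemma pyramid_of_u_rest_last:
  assumes k: "m + 3 \<le> n" and uR: "nbrs_R u = {n - 1}"
  shows "has_pyramid V E"
proof -
  note uR = nbrs_R_eqD[OF uR, simplified]
  define P1 where "P1 = [h m, u]"
  define P2 where "P2 = rev (seg 0 m)"
  define P3 where "P3 = seg m (n - 1)"
  have p1: "path_from_to V E P1 (h m) u"
    unfolding path_from_to_def is_path_iff_list_adj P1_def
    using sizes u_V h_V u_sector_iff[of m] by (auto simp: list_adj_Cons)
  have p2: "path_from_to V E P2 (h m) (h 0)"
    unfolding path_from_to_def P2_def using sizes
    by (auto intro!: is_path_rev is_path_seg simp: hd_rev last_rev)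
  have p3: "path_from_to V E P3 (h m) (h (n - 1))"
    unfolding path_from_to_def P3_def using sizes by (auto intro!: is_path_seg)
  have t: "triangle E u (h 0) (h (n - 1))"
    unfolding triangle_def using sizes uR[of "n - 1"] u_sector_iff[of 0] by simp
  show ?thesis
    by (rule has_pyramidI[OF graph t p1 p2 p3])
      (use sizes k in \<open>auto simp: P1_def P2_def P3_def uR u_sector_iff\<close>)
qed

lemma theta_of_single_closest:
  assumes w: "0 < w" "w < m" and vP: "nbrs_P v = {w}"
    and ab: "a \<le> b" "m + 2 \<le> a" "b + 2 \<le> n"
    and vab: "nbrs_R v \<inter> {a..b} = {a}" and uab: "nbrs_R u \<inter> {a..b} = {b}"
  shows "has_theta V E"
proof -
  note vP = nbrs_P_eqD[OF vP, simplified]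
  have vab: "a \<le> i \<Longrightarrow> i \<le> b \<Longrightarrow> E v (h i) \<longleftrightarrow> i = a"
    and uab: "a \<le> i \<Longrightarrow> i \<le> b \<Longrightarrow> E u (h i) \<longleftrightarrow> i = b" for i
    using nbrs_R_Int_eqD[OF vab, of i] nbrs_R_Int_eqD[OF uab, of i] ab by auto
  define P1 where "P1 = rev (seg 0 w) @ [u]"
  define P2 where "P2 = seg w m @ [u]"
  define P3 where "P3 = [h w] @ [v] @ seg a b @ [u]"
  have p1: "path_from_to V E P1 (h w) u"
    unfolding path_from_to_def P1_def
    by (intro conjI path_intros) (use sizes w in \<open>auto simp: u_sector_iff vP hd_rev last_rev\<close>)
  have p2: "path_from_to V E P2 (h w) u"
    unfolding path_from_to_def P2_def
    by (intro conjI path_intros) (use sizes w in \<open>auto simp: u_sector_iff vP\<close>)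
  have p3: "path_from_to V E P3 (h w) u"
    unfolding path_from_to_def P3_def
    by (intro conjI path_intros) (use sizes w ab in \<open>auto simp: u_sector_iff vP vab uab\<close>)
  show ?thesis
    by (rule has_thetaI[OF graph p1 p2 p3])
      (use sizes w ab in \<open>auto simp: P1_def P2_def P3_def u_sector_iff vP vab uab\<close>)
qed

lemma pyramid_of_edge_closest:
  assumes x: "x + 1 \<le> m" and vP: "nbrs_P v = {x, x + 1}"
    and ab: "a \<le> b" "m + 2 \<le> a" "b + 2 \<le> n"
    and vab: "nbrs_R v \<inter> {a..b} = {a}" and uab: "nbrs_R u \<inter> {a..b} = {b}"
  shows "has_pyramid V E"
proof -
  note vP = nbrs_P_eqD[OF vP, simplified]
  have vab: "a \<le> i \<Longrightarrow> i \<le> b \<Longrightarrow> E v (h i) \<longleftrightarrow> i = a"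
    and uab: "a \<le> i \<Longrightarrow> i \<le> b \<Longrightarrow> E u (h i) \<longleftrightarrow> i = b" for i
    using nbrs_R_Int_eqD[OF vab, of i] nbrs_R_Int_eqD[OF uab, of i] ab by auto
  define P1 where "P1 = [u] @ seg 0 x"
  define P2 where "P2 = [u] @ rev (seg (x + 1) m)"
  define P3 where "P3 = [u] @ rev (seg a b) @ [v]"
  have p1: "path_from_to V E P1 u (h x)"
    unfolding path_from_to_def P1_def
    by (intro conjI path_intros) (use sizes x in \<open>auto simp: u_sector_iff vP\<close>)
  have p2: "path_from_to V E P2 u (h (x + 1))"
    unfolding path_from_to_def P2_def
    by (intro conjI path_intros) (use sizes x in \<open>auto simp: u_sector_iff vP hd_rev last_rev\<close>)
  have p3: "path_from_to V E P3 u v"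
    unfolding path_from_to_def P3_def
    by (intro conjI path_intros) (use sizes ab in \<open>auto simp: vab uab hd_rev last_rev\<close>)
  have t: "triangle E (h x) (h (x + 1)) v"
    unfolding triangle_def using sizes x by (simp add: vP)
  show ?thesis
    by (rule has_pyramidI[OF graph t p1 p2 p3])
      (use sizes x ab in \<open>auto simp: P1_def P2_def P3_def u_sector_iff vP vab uab\<close>)
qed

lemma pyramid_of_single_last:
  assumes w: "0 < w" "w < m" and vP: "nbrs_P v = {w}" and i: "m + 2 \<le> i"
    and vR: "nbrs_R v \<inter> {i..} = {i}" and uR: "nbrs_R u \<inter> {i..} = {n - 1}"
  shows "has_pyramid V E"
proof -
  note vP = nbrs_P_eqD[OF vP, simplified]
  have i_lt: "i < n" using vR by auto
  have vR: "i \<le> j \<Longrightarrow> j < n \<Longrightarrow> E v (h j) \<longleftrightarrow> j = i"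
    and uR: "i \<le> j \<Longrightarrow> j < n \<Longrightarrow> E u (h j) \<longleftrightarrow> j = n - 1" for j
    using nbrs_R_Int_eqD[OF vR, of j] nbrs_R_Int_eqD[OF uR, of j] i by auto
  define P1 where "P1 = rev (seg 0 w)"
  define P2 where "P2 = seg w m @ [u]"
  define P3 where "P3 = [h w] @ [v] @ seg i (n - 1)"
  have p1: "path_from_to V E P1 (h w) (h 0)"
    unfolding path_from_to_def P1_def using sizes w by (auto intro!: path_intros simp: hd_rev last_rev)
  have p2: "path_from_to V E P2 (h w) u"
    unfolding path_from_to_def P2_def
    by (intro conjI path_intros) (use sizes w in \<open>auto simp: u_sector_iff vP\<close>)
  have p3: "path_from_to V E P3 (h w) (h (n - 1))"
    unfolding path_from_to_def P3_def
    by (intro conjI path_intros) (use sizes w i i_lt in \<open>auto simp: vP vR\<close>)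
  have t: "triangle E (h 0) u (h (n - 1))"
    unfolding triangle_def using sizes i i_lt by (simp add: uR u_sector_iff)
  show ?thesis
    by (rule has_pyramidI[OF graph t p1 p2 p3])
      (use sizes w i i_lt in \<open>auto simp: P1_def P2_def P3_def u_sector_iff vP vR uR\<close>)
qed

lemma prism_of_edge_last:
  assumes x: "1 \<le> x" "x + 1 \<le> m" and vP: "nbrs_P v = {x, x + 1}" and i: "m + 2 \<le> i"
    and vR: "nbrs_R v \<inter> {i..} = {i}" and uR: "nbrs_R u \<inter> {i..} = {n - 1}"
  shows "has_prism V E"
proof -
  note vP = nbrs_P_eqD[OF vP, simplified]
  have i_lt: "i < n" using vR by auto
  have vR: "i \<le> j \<Longrightarrow> j < n \<Longrightarrow> E v (h j) \<longleftrightarrow> j = i"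
    and uR: "i \<le> j \<Longrightarrow> j < n \<Longrightarrow> E u (h j) \<longleftrightarrow> j = n - 1" for j
    using nbrs_R_Int_eqD[OF vR, of j] nbrs_R_Int_eqD[OF uR, of j] i by auto
  define P1 where "P1 = rev (seg 0 x)"
  define P2 where "P2 = seg (x + 1) m @ [u]"
  define P3 where "P3 = [v] @ seg i (n - 1)"
  have p1: "path_from_to V E P1 (h x) (h 0)"
    unfolding path_from_to_def P1_def using sizes x by (auto intro!: path_intros simp: hd_rev last_rev)
  have p2: "path_from_to V E P2 (h (x + 1)) u"
    unfolding path_from_to_def P2_def
    by (intro conjI path_intros) (use sizes x in \<open>auto simp: u_sector_iff\<close>)
  have p3: "path_from_to V E P3 v (h (n - 1))"
    unfolding path_from_to_def P3_def
    by (intro conjI path_intros) (use sizes x i i_lt in \<open>auto simp: vR\<close>)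
  have t1: "triangle E (h x) (h (x + 1)) v"
    unfolding triangle_def using sizes x by (simp add: vP)
  have t2: "triangle E (h 0) u (h (n - 1))"
    unfolding triangle_def using sizes i i_lt by (simp add: uR u_sector_iff)
  show ?thesis
    by (rule has_prismI[OF graph t1 t2 p1 p2 p3])
      (use sizes x i i_lt in \<open>auto simp: P1_def P2_def P3_def u_sector_iff vP vR uR\<close>)
qed

lemma theta_of_single_rest_last:
  assumes w: "0 < w" "w < m" and vP: "nbrs_P v = {w}" and vR: "nbrs_R v = {n - 1}"
  shows "has_theta V E"
proof -
  note vP = nbrs_P_eqD[OF vP, simplified] and vR = nbrs_R_eqD[OF vR, simplified]
  have vA: "j < n \<Longrightarrow> E v (h j) \<longleftrightarrow> j = w \<or> j = n - 1" for j
    using w sizes by (cases "j \<le> m") (auto simp: vP vR)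
  define P1 where "P1 = [h w] @ [v] @ [h (n - 1)]"
  define P2 where "P2 = rev (seg 0 w) @ [h (n - 1)]"
  define P3 where "P3 = seg w (n - 1)"
  have p1: "path_from_to V E P1 (h w) (h (n - 1))"
    unfolding path_from_to_def P1_def
    by (intro conjI path_intros) (use sizes w in \<open>auto simp: vP vR\<close>)
  have p2: "path_from_to V E P2 (h w) (h (n - 1))"
    unfolding path_from_to_def P2_def
    by (intro conjI path_intros) (use sizes w in \<open>auto simp: hd_rev last_rev\<close>)
  have p3: "path_from_to V E P3 (h w) (h (n - 1))"
    unfolding path_from_to_def P3_def using sizes w by (auto intro!: path_intros)
  show ?thesis
    by (rule has_thetaI[OF graph p1 p2 p3])
      (use sizes w in \<open>auto simp: P1_def P2_def P3_def vA\<close>)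
qed

lemma pyramid_of_edge_rest_last:
  assumes x: "1 \<le> x" "x + 1 \<le> m" and vP: "nbrs_P v = {x, x + 1}"
    and k: "m + 4 \<le> n" and vR: "nbrs_R v = {n - 1}"
  shows "has_pyramid V E"
proof -
  note vP = nbrs_P_eqD[OF vP, simplified] and vR = nbrs_R_eqD[OF vR, simplified]
  have vA: "j < n \<Longrightarrow> E v (h j) \<longleftrightarrow> j = x \<or> j = x + 1 \<or> j = n - 1" for j
    using x sizes k by (cases "j \<le> m") (auto simp: vP vR)
  define P1 where "P1 = [h (n - 1)] @ [v]"
  define P2 where "P2 = [h (n - 1)] @ seg 0 x"
  define P3 where "P3 = rev (seg (x + 1) (n - 1))"
  have p1: "path_from_to V E P1 (h (n - 1)) v"
    unfolding path_from_to_def P1_def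
    by (intro conjI path_intros) (use sizes x k in \<open>auto simp: vR\<close>)
  have p2: "path_from_to V E P2 (h (n - 1)) (h x)"
    unfolding path_from_to_def P2_def
    by (intro conjI path_intros) (use sizes x k in auto)
  have p3: "path_from_to V E P3 (h (n - 1)) (h (x + 1))"
    unfolding path_from_to_def P3_def using sizes x k
    by (auto intro!: path_intros simp: hd_rev last_rev)
  have t: "triangle E v (h x) (h (x + 1))"
    unfolding triangle_def using sizes x by (simp add: vP)
  show ?thesis
    by (rule has_pyramidI[OF graph t p1 p2 p3])
      (use sizes x k in \<open>auto simp: P1_def P2_def P3_def vA\<close>)
qed

lemma theta_of_first_nbrs:
  assumes z: "1 \<le> z" "z + 1 \<le> m" and vz: "nbrs_P v \<inter> {..z} = {z}"
    and vR: "nbrs_R v = {m + 1, n - 1}" and un: "\<not> E u (h (n - 1))"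
    and ut: "nbrs_R u \<inter> {..t} = {t}" and t: "t + 3 \<le> n"
  shows "has_theta V E"
proof -
  note vR = nbrs_R_eqD[OF vR, simplified]
  have t_gt: "m < t" using ut by auto
  have vz: "j \<le> z \<Longrightarrow> E v (h j) \<longleftrightarrow> j = z"
    and ut: "m < j \<Longrightarrow> j \<le> t \<Longrightarrow> E u (h j) \<longleftrightarrow> j = t" for j
    using nbrs_P_Int_eqD[OF vz, of j] nbrs_R_Int_eqD[OF ut, of j] z t by auto
  define P1 where "P1 = [h 0] @ [h (n - 1)] @ [v]"
  define P2 where "P2 = seg 0 z @ [v]"
  define P3 where "P3 = [h 0] @ [u] @ rev (seg (m + 1) t) @ [v]"
  have p1: "path_from_to V E P1 (h 0) v"
    unfolding path_from_to_def P1_def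
    by (intro conjI path_intros) (use sizes z t in \<open>auto simp: vz vR\<close>)
  have p2: "path_from_to V E P2 (h 0) v"
    unfolding path_from_to_def P2_def
    by (intro conjI path_intros) (use sizes z in \<open>auto simp: vz\<close>)
  have p3: "path_from_to V E P3 (h 0) v"
    unfolding path_from_to_def P3_def
    by (intro conjI path_intros)
      (use sizes z t t_gt in \<open>auto simp: vz vR ut u_sector_iff hd_rev last_rev\<close>)
  show ?thesis
    by (rule has_thetaI[OF graph p1 p2 p3])
      (use sizes z t t_gt un in \<open>auto simp: P1_def P2_def P3_def vz vR ut u_sector_iff\<close>)
qed

lemma theta_of_single_short_rest:
  assumes w: "2 \<le> w" "w < m" and vP: "nbrs_P v = {w}" and nm: "n = m + 4"
    and vR: "nbrs_R v = {m + 1, m + 3}" and uR: "nbrs_R u = {m + 2}"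
  shows "has_theta V E"
proof -
  note vP = nbrs_P_eqD[OF vP, simplified] and vR = nbrs_R_eqD[OF vR, simplified]
    and uR = nbrs_R_eqD[OF uR, simplified]
  define P1 where "P1 = seg 0 w"
  define P2 where "P2 = [h 0] @ [h (n - 1)] @ [v] @ [h w]"
  define P3 where "P3 = [h 0] @ [u] @ rev (seg w m)"
  have p1: "path_from_to V E P1 (h 0) (h w)"
    unfolding path_from_to_def P1_def using sizes w by (auto intro!: path_intros)
  have p2: "path_from_to V E P2 (h 0) (h w)"
    unfolding path_from_to_def P2_def
    by (intro conjI path_intros) (use sizes w nm in \<open>auto simp: vP vR\<close>)
  have p3: "path_from_to V E P3 (h 0) (h w)"
    unfolding path_from_to_def P3_def
    by (intro conjI path_intros) (use sizes w in \<open>auto simp: u_sector_iff hd_rev last_rev\<close>)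
  show ?thesis
    by (rule has_thetaI[OF graph p1 p2 p3])
      (use sizes w nm in \<open>auto simp: P1_def P2_def P3_def vP vR uR u_sector_iff\<close>)
qed

lemma theta_of_edge_start:
  assumes vP: "nbrs_P v = {0, 1}" and k: "m + 4 \<le> n"
    and vR: "nbrs_R v = {m + 1, n - 1}" and u1: "\<not> E u (h (m + 1))" and u2: "E u (h (m + 2))"
  shows "has_theta V E"
proof -
  note vP = nbrs_P_eqD[OF vP, simplified] and vR = nbrs_R_eqD[OF vR, simplified]
  define P1 where "P1 = [h (m + 1)] @ [h m] @ [u]"
  define P2 where "P2 = [h (m + 1)] @ [h (m + 2)] @ [u]"
  define P3 where "P3 = [h (m + 1)] @ [v] @ [h 0] @ [u]"
  have p1: "path_from_to V E P1 (h (m + 1)) u"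
    unfolding path_from_to_def P1_def
    by (intro conjI path_intros) (use sizes k u1 in \<open>auto simp: u_sector_iff\<close>)
  have p2: "path_from_to V E P2 (h (m + 1)) u"
    unfolding path_from_to_def P2_def
    by (intro conjI path_intros) (use sizes k u1 u2 in auto)
  have p3: "path_from_to V E P3 (h (m + 1)) u"
    unfolding path_from_to_def P3_def
    by (intro conjI path_intros) (use sizes k u1 in \<open>auto simp: vP vR u_sector_iff\<close>)
  show ?thesis
    by (rule has_thetaI[OF graph p1 p2 p3])
      (use sizes k u1 u2 in \<open>auto simp: P1_def P2_def P3_def vP vR u_sector_iff\<close>)
qed

lemma theta_of_edge_rest_ends:
  assumes x: "1 \<le> x" "x + 2 \<le> m" and vP: "nbrs_P v = {x, x + 1}" and k: "m + 4 \<le> n"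
    and vR: "nbrs_R v = {m + 1, n - 1}" and u1: "\<not> E u (h (m + 1))" and un: "\<not> E u (h (n - 1))"
  shows "has_theta V E"
proof -
  note vP = nbrs_P_eqD[OF vP, simplified] and vR = nbrs_R_eqD[OF vR, simplified]
  define P1 where "P1 = [h 0] @ [h (n - 1)] @ [v]"
  define P2 where "P2 = seg 0 x @ [v]"
  define P3 where "P3 = [h 0] @ [u] @ [h m] @ [h (m + 1)] @ [v]"
  have p1: "path_from_to V E P1 (h 0) v"
    unfolding path_from_to_def P1_def
    by (intro conjI path_intros) (use sizes x k in \<open>auto simp: vP vR\<close>)
  have p2: "path_from_to V E P2 (h 0) v"
    unfolding path_from_to_def P2_def
    by (intro conjI path_intros) (use sizes x in \<open>auto simp: vP\<close>)
  have p3: "path_from_to V E P3 (h 0) v"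
    unfolding path_from_to_def P3_def
    by (intro conjI path_intros) (use sizes x k u1 in \<open>auto simp: vP vR u_sector_iff\<close>)
  show ?thesis
    by (rule has_thetaI[OF graph p1 p2 p3])
      (use sizes x k u1 un in \<open>auto simp: P1_def P2_def P3_def vP vR u_sector_iff\<close>)
qed

text \<open>The cube with \<open>u\<close> and \<open>v\<close> antipodal: the hole is the hexagon formed by the other
  six vertices.\<close>
lemma cube_of_hexagon:
  assumes n6: "n = 6" and m2: "m = 2" and vP: "nbrs_P v = {1}"
    and uR: "nbrs_R u = {4}" and vR: "nbrs_R v = {3, 5}"
  shows "induced_iso_cube E (h ` {..<n} \<union> {u, v})"
proof -
  have eu: "E u (h i) \<longleftrightarrow> i = 0 \<or> i = 2 \<or> i = 4" if "i < 6" for i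
    using that n6 m2 u_sector_iff[of i] nbrs_R_eqD[OF uR, of i] by (cases "i \<le> 2") auto
  have ev: "E v (h i) \<longleftrightarrow> i = 1 \<or> i = 3 \<or> i = 5" if "i < 6" for i
    using that n6 m2 nbrs_P_eqD[OF vP, of i] nbrs_R_eqD[OF vR, of i] by (cases "i \<le> 2") auto
  have ea: "E (h i) (h j) \<longleftrightarrow> (j = Suc i \<or> i = Suc j \<or> (i = 0 \<and> j = 5) \<or> (j = 0 \<and> i = 5))"
    if "i < 6" "j < 6" for i j
    using that n6 by simp
  have S: "h ` {..<n} \<union> {u, v} = {u, v, h 0, h 1, h 2, h 3, h 4, h 5}"
  proof -
    have "{..<n} = {0, 1, 2, 3, 4, 5}" using n6 by auto
    then show ?thesis by auto
  qed
  have d: "h 0 \<noteq> h 1" "h 0 \<noteq> h 2" "h 0 \<noteq> h 3" "h 0 \<noteq> h 4" "h 0 \<noteq> h 5"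
    "h 1 \<noteq> h 2" "h 1 \<noteq> h 3" "h 1 \<noteq> h 4" "h 1 \<noteq> h 5"
    "h 2 \<noteq> h 3" "h 2 \<noteq> h 4" "h 2 \<noteq> h 5" "h 3 \<noteq> h 4" "h 3 \<noteq> h 5" "h 4 \<noteq> h 5"
    and du: "h 0 \<noteq> u" "h 1 \<noteq> u" "h 2 \<noteq> u" "h 3 \<noteq> u" "h 4 \<noteq> u" "h 5 \<noteq> u"
    "h 0 \<noteq> v" "h 1 \<noteq> v" "h 2 \<noteq> v" "h 3 \<noteq> v" "h 4 \<noteq> v" "h 5 \<noteq> v"
    using n6 by simp_all
  define f where "f x = (if x = u then (False, False, False) else if x = v then (True, True, True)
     else if x = h 0 then (True, False, False) else if x = h 1 then (True, True, False)
     else if x = h 2 then (False, True, False) else if x = h 3 then (False, True, True)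
     else if x = h 4 then (False, False, True) else (True, False, True))" for x
  have fv: "f u = (False, False, False)" "f v = (True, True, True)"
    "f (h 0) = (True, False, False)" "f (h 1) = (True, True, False)"
    "f (h 2) = (False, True, False)" "f (h 3) = (False, True, True)"
    "f (h 4) = (False, False, True)" "f (h 5) = (True, False, True)"
    unfolding f_def using d du by (simp_all add: eq_commute)
  have "inj_on f {u, v, h 0, h 1, h 2, h 3, h 4, h 5}"
    unfolding inj_on_def using fv d du by auto
  moreover have "f ` {u, v, h 0, h 1, h 2, h 3, h 4, h 5} = UNIV"
  proof -
    have "(a, b, c) \<in> f ` {u, v, h 0, h 1, h 2, h 3, h 4, h 5}" for a b c
      using fv by (cases a; cases b; cases c) auto
    then show ?thesis by auto
  qed
  moreover have "\<forall>x\<in>{u, v, h 0, h 1, h 2, h 3, h 4, h 5}. \<forall>y\<in>{u, v, h 0, h 1, h 2, h 3, h 4, h 5}.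
      E x y \<longleftrightarrow> cube_adj (f x) (f y)"
    using fv ea eu ev by (auto simp: cube_adj_def)
  ultimately show ?thesis unfolding induced_iso_cube_def S bij_betw_def by blast
qed

text \<open>In the lemmas named \<open>single_\<dots>\<close> the vertex \<open>v\<close> has exactly one neighbour on the
  sector, in its interior; in those named \<open>edge_\<dots>\<close> its neighbours on the sector are the
  two ends of an edge. Positions in \<open>{m + 2..<n - 1}\<close> are the inner vertices of the rest.\<close>

lemma not_near_start:
  assumes "nbrs_P v \<subseteq> {0, 1}" "nbrs_R v \<subseteq> {n - 1}"
  shows False
proof (rule not_near[of v 0])
  show "\<forall>i<n. E v (h i) \<longrightarrow> i = 0 \<or> cyc_adj n i 0"
  proof (intro allI impI)
    fix i assume "i < n" "E v (h i)"
    then have "i \<in> nbrs_P v \<or> i \<in> nbrs_R v" by (cases "i \<le> m") auto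
    then show "i = 0 \<or> cyc_adj n i 0" using assms by (auto simp: cyc_adj_def)
  qed
qed (use sizes in auto)

lemma nbrs_R_v_nonempty:
  assumes c: "1 \<le> c" "c < m" and vP: "nbrs_P v \<subseteq> {c - 1, c, c + 1}"
  shows "nbrs_R v \<noteq> {}"
proof
  assume none: "nbrs_R v = {}"
  show False
  proof (rule not_near[of v c])
    show "\<forall>i<n. E v (h i) \<longrightarrow> i = c \<or> cyc_adj n i c"
    proof (intro allI impI)
      fix i assume "i < n" "E v (h i)"
      then have "i \<in> nbrs_P v \<or> i \<in> nbrs_R v" by (cases "i \<le> m") auto
      then show "i = c \<or> cyc_adj n i c" using vP c none by (auto simp: cyc_adj_def)
    qed
  qed (use c sizes none in auto)
qed

lemma u_rest_ends:
  assumes uI: "nbrs_R u \<inter> {m + 2..<n - 1} = {}"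
  shows "m + 3 \<le> n" and "nbrs_R u = {m + 1, n - 1}"
proof -
  have sub: "nbrs_R u \<subseteq> {m + 1, n - 1}"
  proof
    fix j assume "j \<in> nbrs_R u"
    moreover from this have "j \<notin> {m + 2..<n - 1}" using uI by blast
    ultimately show "j \<in> {m + 1, n - 1}" by auto
  qed
  show k: "m + 3 \<le> n"
  proof (rule ccontr)
    assume "\<not> m + 3 \<le> n"
    then have n: "n = m + 2" using m_le by linarith
    show False
    proof (rule not_near[of u "n - 1"])
      show "\<forall>i<n. E u (h i) \<longrightarrow> i = n - 1 \<or> cyc_adj n i (n - 1)"
      proof (intro allI impI)
        fix i assume "i < n" "E u (h i)"
        then have "i \<in> {0, m} \<or> i \<in> nbrs_R u" using u_sector_iff by (cases "i \<le> m") auto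
        then show "i = n - 1 \<or> cyc_adj n i (n - 1)" using sub n by (auto simp: cyc_adj_def)
      qed
    qed (use n in auto)
  qed
  have "m + 1 \<in> nbrs_R u"
  proof (rule ccontr)
    assume "m + 1 \<notin> nbrs_R u"
    then have "nbrs_R u = {n - 1}" using sub nbrs_R_u_nonempty by blast
    then show False using pyramid_of_u_rest_last[OF k] not_pyramid by simp
  qed
  moreover have "n - 1 \<in> nbrs_R u"
  proof (rule ccontr)
    interpret M: sector_setting V E n "h \<circ> mirror n m" m u v by (rule mirror_setting)
    assume "n - 1 \<notin> nbrs_R u"
    then have "nbrs_R u = {m + 1}" using sub nbrs_R_u_nonempty by blast
    then have "M.nbrs_R u = {n - 1}" by (simp add: mirror_nbrs_R)
    then show False using M.pyramid_of_u_rest_last[OF k] not_pyramid by simp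
  qed
  ultimately show "nbrs_R u = {m + 1, n - 1}" using sub by blast
qed

lemma nbrs_R_last:
  assumes "\<not> nbrs_R z \<subseteq> {m + 1}"
  obtains i where "m + 2 \<le> i" "nbrs_R z \<inter> {i..} = {i}"
proof -
  obtain j where j: "j \<in> nbrs_R z" "j \<noteq> m + 1" using assms by blast
  define i where "i = Max (nbrs_R z)"
  have "j \<le> i" unfolding i_def by (rule Max_ge[OF finite_nbrs_R j(1)])
  moreover have "m + 2 \<le> j" using j by auto
  ultimately have "m + 2 \<le> i" by linarith
  moreover have "nbrs_R z \<inter> {i..} = {i}"
    unfolding i_def using finite_nbrs_R j(1) by (intro Int_atLeast_Max) auto
  ultimately show thesis by (rule that)
qed

lemma closest_inner_nbrs:
  assumes "nbrs_R v \<inter> {m + 2..<n - 1} \<noteq> {}" "nbrs_R u \<inter> {m + 2..<n - 1} \<noteq> {}"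
  obtains a b where "a \<le> b" "m + 2 \<le> a" "b + 2 \<le> n"
      "nbrs_R v \<inter> {a..b} = {a}" "nbrs_R u \<inter> {a..b} = {b}"
    | a b where "a \<le> b" "m + 2 \<le> a" "b + 2 \<le> n"
      "rest_nbrs E n (h \<circ> mirror n m) m v \<inter> {a..b} = {a}"
      "rest_nbrs E n (h \<circ> mirror n m) m u \<inter> {a..b} = {b}"
proof -
  let ?I = "{m + 2..<n - 1}"
  from closest_pair_nat[OF assms] show thesis
  proof cases
    case (1 a b)
    then have ab: "a \<in> ?I" "b \<in> ?I" by blast+
    then have "{a..b} \<subseteq> ?I" by auto
    then have "nbrs_R v \<inter> {a..b} = {a}" "nbrs_R u \<inter> {a..b} = {b}" using 1(2,3) by blast+
    moreover have "m + 2 \<le> a" "b + 2 \<le> n" using ab by auto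
    ultimately show thesis using that(1) 1(1) by blast
  next
    case (2 a b)
    then have ab: "a \<in> ?I" "b \<in> ?I" by blast+
    then have "{b..a} \<subseteq> ?I" by auto
    then have "nbrs_R v \<inter> {b..a} = {a}" "nbrs_R u \<inter> {b..a} = {b}" using 2(2,3) by blast+
    moreover have "m < b" "a < n" using ab by auto
    ultimately have "rest_nbrs E n (h \<circ> mirror n m) m v \<inter> {m + n - a..m + n - b} = {m + n - a}"
      "rest_nbrs E n (h \<circ> mirror n m) m u \<inter> {m + n - a..m + n - b} = {m + n - b}"
      by (simp_all add: mirror_nbrs_R_Int_interval)
    moreover have "m + n - a \<le> m + n - b" "m + 2 \<le> m + n - a" "m + n - b + 2 \<le> n"
      using ab 2(1) by auto
    ultimately show thesis using that(2) by blast
  qed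
qed

lemma single_inner_nbrs_not_both:
  assumes w: "0 < w" "w < m" and vP: "nbrs_P v = {w}"
  shows "nbrs_R v \<inter> {m + 2..<n - 1} = {} \<or> nbrs_R u \<inter> {m + 2..<n - 1} = {}"
proof (rule ccontr)
  interpret M: sector_setting V E n "h \<circ> mirror n m" m u v by (rule mirror_setting)
  assume "\<not> ?thesis"
  then have inner: "nbrs_R v \<inter> {m + 2..<n - 1} \<noteq> {}" "nbrs_R u \<inter> {m + 2..<n - 1} \<noteq> {}"
    by auto
  have w': "0 < m - w" "m - w < m" using w by auto
  have vP': "M.nbrs_P v = {m - w}" using vP by (simp add: mirror_nbrs_P)
  from closest_inner_nbrs[OF inner] show False
  proof cases
    case (1 a b)
    then show False using theta_of_single_closest[OF w vP] not_theta by blast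
  next
    case (2 a b)
    then show False using M.theta_of_single_closest[OF w' vP'] not_theta by blast
  qed
qed

lemma single_rest_v_first:
  assumes w: "0 < w" "w < m" and vP: "nbrs_P v = {w}" and uR: "nbrs_R u = {m + 1, n - 1}"
  shows "nbrs_R v \<subseteq> {m + 1}"
proof (rule ccontr)
  assume "\<not> nbrs_R v \<subseteq> {m + 1}"
  then obtain i where i: "m + 2 \<le> i" "nbrs_R v \<inter> {i..} = {i}" by (rule nbrs_R_last)
  then have "i \<in> nbrs_R v" by blast
  then have "nbrs_R u \<inter> {i..} = {n - 1}" unfolding uR using i(1) by auto
  then show False using pyramid_of_single_last[OF w vP i] not_pyramid by blast
qed

lemma single_u_inner_nbr:
  assumes w: "0 < w" "w < m" and vP: "nbrs_P v = {w}"
  shows "nbrs_R u \<inter> {m + 2..<n - 1} \<noteq> {}"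
proof
  assume uI: "nbrs_R u \<inter> {m + 2..<n - 1} = {}"
  interpret M: sector_setting V E n "h \<circ> mirror n m" m u v by (rule mirror_setting)
  have k: "m + 3 \<le> n" and uR: "nbrs_R u = {m + 1, n - 1}" using u_rest_ends[OF uI] by blast+
  have "M.nbrs_R u = {m + 1, n - 1}" using uR by (simp add: mirror_nbrs_R insert_commute)
  moreover have "0 < m - w" "m - w < m" "M.nbrs_P v = {m - w}"
    using w vP by (simp_all add: mirror_nbrs_P)
  ultimately have "M.nbrs_R v \<subseteq> {m + 1}" using M.single_rest_v_first by blast
  then have "nbrs_R v \<subseteq> {n - 1}" by (rule nbrs_R_subset_of_mirror)
  moreover have "nbrs_R v \<subseteq> {m + 1}" by (rule single_rest_v_first[OF w vP uR])
  moreover have "nbrs_P v \<subseteq> {w - 1, w, w + 1}" using vP by simp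
  then have "nbrs_R v \<noteq> {}" using w by (intro nbrs_R_v_nonempty) simp_all
  then obtain j where "j \<in> nbrs_R v" by blast
  ultimately have "j = n - 1" "j = m + 1" by blast+
  then show False using k by linarith
qed

lemma single_rest_v_ends:
  assumes w: "0 < w" "w < m" and vP: "nbrs_P v = {w}" and vI: "nbrs_R v \<inter> {m + 2..<n - 1} = {}"
  shows "nbrs_R v = {m + 1, n - 1}"
proof -
  interpret M: sector_setting V E n "h \<circ> mirror n m" m u v by (rule mirror_setting)
  have sub: "nbrs_R v \<subseteq> {m + 1, n - 1}"
  proof
    fix j assume "j \<in> nbrs_R v"
    moreover from this have "j \<notin> {m + 2..<n - 1}" using vI by blast
    ultimately show "j \<in> {m + 1, n - 1}" by auto
  qed
  have "nbrs_P v \<subseteq> {w - 1, w, w + 1}" using vP by simp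
  then have "nbrs_R v \<noteq> {}" using w by (intro nbrs_R_v_nonempty) simp_all
  moreover have "nbrs_R v \<noteq> {n - 1}"
    using theta_of_single_rest_last[OF w vP] not_theta by blast
  moreover have "nbrs_R v \<noteq> {m + 1}"
  proof
    assume "nbrs_R v = {m + 1}"
    then have "M.nbrs_R v = {n - 1}" by (simp add: mirror_nbrs_R)
    moreover have "0 < m - w" "m - w < m" "M.nbrs_P v = {m - w}"
      using w vP by (simp_all add: mirror_nbrs_P)
    ultimately show False using M.theta_of_single_rest_last not_theta by blast
  qed
  ultimately show ?thesis using sub by (intro subset_doubleton_cases)
qed

lemma single_u_not_rest_last:
  assumes w: "0 < w" "w < m" and vP: "nbrs_P v = {w}"
    and vn: "n - 1 \<in> nbrs_R v" and k: "m + 3 \<le> n"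
  shows "\<not> E u (h (n - 1))"
proof
  assume un: "E u (h (n - 1))"
  have "nbrs_R v \<inter> {n - 1..} = {n - 1}" "nbrs_R u \<inter> {n - 1..} = {n - 1}"
    using vn un k by auto
  moreover have "m + 2 \<le> n - 1" using k by linarith
  ultimately show False using pyramid_of_single_last[OF w vP] not_pyramid by blast
qed

text \<open>Otherwise the first or the last neighbour of \<open>u\<close> on the rest closes a theta.\<close>
lemma single_rest_u_middle:
  assumes w: "0 < w" "w < m" and vP: "nbrs_P v = {w}"
    and vR: "nbrs_R v = {m + 1, n - 1}" and k: "m + 3 \<le> n"
  shows "n = m + 4" and "nbrs_R u = {m + 2}"
proof -
  interpret M: sector_setting V E n "h \<circ> mirror n m" m u v by (rule mirror_setting)
  have w': "0 < m - w" "m - w < m" "M.nbrs_P v = {m - w}"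
    using w vP by (simp_all add: mirror_nbrs_P)
  have vR': "M.nbrs_R v = {m + 1, n - 1}" using vR by (simp add: mirror_nbrs_R insert_commute)
  have un: "\<not> E u (h (n - 1))" using single_u_not_rest_last[OF w vP] vR k by simp
  have u1: "\<not> E u ((h \<circ> mirror n m) (n - 1))" using M.single_u_not_rest_last[OF w'] vR' k by simp
  then have u1': "\<not> E u (h (m + 1))" using k by simp
  define t1 where "t1 = Min (nbrs_R u)"
  define t2 where "t2 = Max (nbrs_R u)"
  have t1: "nbrs_R u \<inter> {..t1} = {t1}" and t2: "nbrs_R u \<inter> {t2..} = {t2}"
    unfolding t1_def t2_def using finite_nbrs_R nbrs_R_u_nonempty
    by (simp_all add: Int_atMost_Min Int_atLeast_Max)
  have "nbrs_P v \<inter> {..w} = {w}" using vP by simp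
  then have "\<not> t1 + 3 \<le> n"
    using theta_of_first_nbrs[OF _ _ _ vR un t1] w not_theta by (metis One_nat_def Suc_leI Suc_eq_plus1)
  moreover have "M.nbrs_P v \<inter> {..m - w} = {m - w}" using w'(3) by simp
  then have "\<not> m + n - t2 + 3 \<le> n"
    using M.theta_of_first_nbrs[OF _ _ _ vR' u1 mirror_nbrs_R_last[OF t2]] w' not_theta
    by (metis One_nat_def Suc_leI Suc_eq_plus1)
  moreover have "t1 \<in> nbrs_R u" "t2 \<in> nbrs_R u" using t1 t2 by blast+
  moreover have "t1 \<le> t2"
    unfolding t1_def using Min_le[OF finite_nbrs_R] \<open>t2 \<in> nbrs_R u\<close> by blast
  moreover have "m + 2 \<le> t1" using \<open>t1 \<in> nbrs_R u\<close> u1' by (cases "t1 = m + 1") auto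
  moreover have "t2 + 2 \<le> n" using \<open>t2 \<in> nbrs_R u\<close> un by (cases "t2 = n - 1") auto
  ultimately have "t1 = m + 2" "t2 = m + 2" "n = m + 4" by linarith+
  then show "n = m + 4" by simp
  have "nbrs_R u \<subseteq> {t1..t2}" unfolding t1_def t2_def using finite_nbrs_R by auto
  then show "nbrs_R u = {m + 2}" using \<open>t1 = m + 2\<close> \<open>t2 = m + 2\<close> \<open>t1 \<in> nbrs_R u\<close> by auto
qed

lemma cube_of_single_no_inner_v_nbr:
  assumes w: "0 < w" "w < m" and vP: "nbrs_P v = {w}"
    and vI: "nbrs_R v \<inter> {m + 2..<n - 1} = {}" and uI: "nbrs_R u \<inter> {m + 2..<n - 1} \<noteq> {}"
  shows "induced_iso_cube E (h ` {..<n} \<union> {u, v})"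
proof -
  interpret M: sector_setting V E n "h \<circ> mirror n m" m u v by (rule mirror_setting)
  have k: "m + 3 \<le> n" using uI by auto
  have vR: "nbrs_R v = {m + 1, n - 1}" by (rule single_rest_v_ends[OF w vP vI])
  have n: "n = m + 4" and uR: "nbrs_R u = {m + 2}"
    using single_rest_u_middle[OF w vP vR k] by blast+
  have "n - 1 = m + 3" using n by simp
  then have vR': "nbrs_R v = {m + 1, m + 3}" using vR by simp
  have "\<not> 2 \<le> w" using theta_of_single_short_rest[OF _ _ vP n vR' uR] w not_theta by blast
  moreover have "\<not> 2 \<le> m - w"
  proof
    assume "2 \<le> m - w"
    moreover have "M.nbrs_P v = {m - w}" using vP by (simp add: mirror_nbrs_P)
    moreover have "M.nbrs_R v = (\<lambda>j. m + n - j) ` {m + 1, m + 3}"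
      "M.nbrs_R u = (\<lambda>j. m + n - j) ` {m + 2}"
      using vR' uR by (simp_all only: mirror_nbrs_R)
    then have "M.nbrs_R v = {m + 1, m + 3}" "M.nbrs_R u = {m + 2}"
      using n by (simp_all add: insert_commute add.commute)
    ultimately show False using M.theta_of_single_short_rest w n not_theta by fastforce
  qed
  ultimately have "w = 1" "m = 2" using w by auto
  then show ?thesis using cube_of_hexagon vP uR vR' n by simp
qed

lemma cube_of_single_sector_nbr:
  assumes w: "0 < w" "w < m" and vP: "nbrs_P v = {w}"
  shows "induced_iso_cube E (h ` {..<n} \<union> {u, v})"
  using single_inner_nbrs_not_both[OF w vP] single_u_inner_nbr[OF w vP]
    cube_of_single_no_inner_v_nbr[OF w vP] by blast

lemma mirror_nbrs_P_edge:
  assumes "x + 1 \<le> m" "nbrs_P v = {x, x + 1}"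
  shows "sector_nbrs E (h \<circ> mirror n m) m v = {m - 1 - x, m - 1 - x + 1}"
  using assms by (auto simp: mirror_nbrs_P)

lemma edge_nbrs_R_v_nonempty:
  assumes x: "x + 1 \<le> m" and vP: "nbrs_P v = {x, x + 1}"
  shows "nbrs_R v \<noteq> {}"
proof (cases "x = 0")
  case True
  then have "nbrs_P v \<subseteq> {1 - 1, 1, 1 + 1}" using vP by auto
  then show ?thesis using m_ge by (intro nbrs_R_v_nonempty[of 1]) simp_all
next
  case False
  then have "nbrs_P v \<subseteq> {x - 1, x, x + 1}" using vP by auto
  then show ?thesis using False x by (intro nbrs_R_v_nonempty[of x]) simp_all
qed

lemma edge_inner_nbrs_not_both:
  assumes x: "x + 1 \<le> m" and vP: "nbrs_P v = {x, x + 1}"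
  shows "nbrs_R v \<inter> {m + 2..<n - 1} = {} \<or> nbrs_R u \<inter> {m + 2..<n - 1} = {}"
proof (rule ccontr)
  interpret M: sector_setting V E n "h \<circ> mirror n m" m u v by (rule mirror_setting)
  assume "\<not> ?thesis"
  then have inner: "nbrs_R v \<inter> {m + 2..<n - 1} \<noteq> {}" "nbrs_R u \<inter> {m + 2..<n - 1} \<noteq> {}"
    by auto
  have x': "m - 1 - x + 1 \<le> m" using x by linarith
  note vP' = mirror_nbrs_P_edge[OF x vP]
  from closest_inner_nbrs[OF inner] show False
  proof cases
    case (1 a b)
    then show False using pyramid_of_edge_closest[OF x vP] not_pyramid by blast
  next
    case (2 a b)
    then show False using M.pyramid_of_edge_closest[OF x' vP'] not_pyramid by blast
  qed
qed

lemma edge_rest_v_first: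
  assumes x: "1 \<le> x" "x + 1 \<le> m" and vP: "nbrs_P v = {x, x + 1}"
    and uR: "nbrs_R u = {m + 1, n - 1}"
  shows "nbrs_R v \<subseteq> {m + 1}"
proof (rule ccontr)
  assume "\<not> nbrs_R v \<subseteq> {m + 1}"
  then obtain i where i: "m + 2 \<le> i" "nbrs_R v \<inter> {i..} = {i}" by (rule nbrs_R_last)
  then have "i \<in> nbrs_R v" by blast
  then have "nbrs_R u \<inter> {i..} = {n - 1}" unfolding uR using i(1) by auto
  then show False using prism_of_edge_last[OF x vP i] not_prism by blast
qed

lemma edge_u_inner_nbr:
  assumes x: "x + 1 \<le> m" and vP: "nbrs_P v = {x, x + 1}"
  shows "nbrs_R u \<inter> {m + 2..<n - 1} \<noteq> {}"
proof
  assume uI: "nbrs_R u \<inter> {m + 2..<n - 1} = {}"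
  interpret M: sector_setting V E n "h \<circ> mirror n m" m u v by (rule mirror_setting)
  have k: "m + 3 \<le> n" and uR: "nbrs_R u = {m + 1, n - 1}" using u_rest_ends[OF uI] by blast+
  have uR': "M.nbrs_R u = {m + 1, n - 1}" using uR by (simp add: mirror_nbrs_R insert_commute)
  have x': "m - 1 - x + 1 \<le> m" using x by linarith
  note vP' = mirror_nbrs_P_edge[OF x vP]
  have last: "nbrs_R v \<subseteq> {n - 1}" if "x + 2 \<le> m"
  proof (rule nbrs_R_subset_of_mirror)
    show "M.nbrs_R v \<subseteq> {m + 1}"
      using M.edge_rest_v_first[OF _ x' vP' uR'] that by linarith
  qed
  have first: "nbrs_R v \<subseteq> {m + 1}" if "1 \<le> x"
    by (rule edge_rest_v_first[OF that x vP uR])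
  have ne: "nbrs_R v \<noteq> {}" by (rule edge_nbrs_R_v_nonempty[OF x vP])
  consider "x = 0" | "x + 1 = m" | "1 \<le> x" "x + 2 \<le> m" using x by linarith
  then show False
  proof cases
    case 1
    then show False using not_near_start last m_ge vP by simp
  next
    case 2
    have "M.nbrs_R v \<subseteq> (\<lambda>j. m + n - j) ` {m + 1}"
      unfolding mirror_nbrs_R using first 2 m_ge by (intro image_mono) simp
    moreover have "M.nbrs_P v = {0, 1}" using vP' 2 by simp
    ultimately show False using M.not_near_start by simp
  next
    case 3
    then show False using first last ne k by auto
  qed
qed

lemma edge_rest_v_not_last:
  assumes x: "x + 1 \<le> m" and vP: "nbrs_P v = {x, x + 1}" and k: "m + 4 \<le> n"
  shows "nbrs_R v \<noteq> {n - 1}"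
proof
  assume vR: "nbrs_R v = {n - 1}"
  show False
  proof (cases "x = 0")
    case True
    then show False using not_near_start vP vR by simp
  next
    case False
    then show False using pyramid_of_edge_rest_last[OF _ x vP k vR] not_pyramid by simp
  qed
qed

lemma edge_u_not_rest_last:
  assumes x: "1 \<le> x" "x + 1 \<le> m" and vP: "nbrs_P v = {x, x + 1}"
    and vn: "n - 1 \<in> nbrs_R v" and k: "m + 3 \<le> n"
  shows "\<not> E u (h (n - 1))"
proof
  assume un: "E u (h (n - 1))"
  have "nbrs_R v \<inter> {n - 1..} = {n - 1}" "nbrs_R u \<inter> {n - 1..} = {n - 1}"
    using vn un k by auto
  moreover have "m + 2 \<le> n - 1" using k by linarith
  ultimately show False using prism_of_edge_last[OF x vP] not_prism by blast
qed

lemma edge_rest_v_ends: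
  assumes x: "x + 1 \<le> m" and vP: "nbrs_P v = {x, x + 1}" and k: "m + 4 \<le> n"
    and vI: "nbrs_R v \<inter> {m + 2..<n - 1} = {}"
  shows "nbrs_R v = {m + 1, n - 1}"
proof -
  interpret M: sector_setting V E n "h \<circ> mirror n m" m u v by (rule mirror_setting)
  have sub: "nbrs_R v \<subseteq> {m + 1, n - 1}"
  proof
    fix j assume "j \<in> nbrs_R v"
    moreover from this have "j \<notin> {m + 2..<n - 1}" using vI by blast
    ultimately show "j \<in> {m + 1, n - 1}" by auto
  qed
  have "nbrs_R v \<noteq> {m + 1}"
  proof
    assume "nbrs_R v = {m + 1}"
    then have "M.nbrs_R v = {n - 1}" by (simp add: mirror_nbrs_R)
    moreover have "m - 1 - x + 1 \<le> m" using x by linarith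
    ultimately show False
      using M.edge_rest_v_not_last[OF _ mirror_nbrs_P_edge[OF x vP] k] by blast
  qed
  then show ?thesis
    using sub edge_nbrs_R_v_nonempty[OF x vP] edge_rest_v_not_last[OF x vP k]
    by (intro subset_doubleton_cases)
qed

lemma edge_start_impossible:
  assumes vP: "nbrs_P v = {0, 1}" and k: "m + 4 \<le> n" and vR: "nbrs_R v = {m + 1, n - 1}"
  shows False
proof -
  interpret M: sector_setting V E n "h \<circ> mirror n m" m u v by (rule mirror_setting)
  have vP': "M.nbrs_P v = {m - 1, m - 1 + 1}" using mirror_nbrs_P_edge[of 0] vP m_ge by simp
  have vR': "M.nbrs_R v = {m + 1, n - 1}" using vR by (simp add: mirror_nbrs_R insert_commute)
  have x': "1 \<le> m - 1" "m - 1 + 1 \<le> m" using m_ge by linarith+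
  have "\<not> E u ((h \<circ> mirror n m) (n - 1))"
    using M.edge_u_not_rest_last[OF x' vP'] vR' k by simp
  then have u1: "\<not> E u (h (m + 1))" using k by simp
  define t2 where "t2 = Max (nbrs_R u)"
  have t2: "nbrs_R u \<inter> {t2..} = {t2}"
    unfolding t2_def using finite_nbrs_R nbrs_R_u_nonempty by (simp add: Int_atLeast_Max)
  have "M.nbrs_P v \<inter> {..m - 1} = {m - 1}" using vP' by auto
  then have "\<not> m + n - t2 + 3 \<le> n"
    using M.theta_of_first_nbrs[OF x' _ vR' _ mirror_nbrs_R_last[OF t2]] u1 k not_theta by auto
  moreover have "t2 \<in> nbrs_R u" using t2 by blast
  moreover from this have "t2 \<noteq> m + 1" using u1 by auto
  ultimately have "t2 = m + 2" by auto
  then have "E u (h (m + 2))" using \<open>t2 \<in> nbrs_R u\<close> by simp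
  then show False using theta_of_edge_start[OF vP k vR u1] not_theta by blast
qed

lemma edge_v_inner_nbr:
  assumes x: "x + 1 \<le> m" and vP: "nbrs_P v = {x, x + 1}"
    and uI: "nbrs_R u \<inter> {m + 2..<n - 1} \<noteq> {}"
  shows "nbrs_R v \<inter> {m + 2..<n - 1} \<noteq> {}"
proof
  assume vI: "nbrs_R v \<inter> {m + 2..<n - 1} = {}"
  interpret M: sector_setting V E n "h \<circ> mirror n m" m u v by (rule mirror_setting)
  have k: "m + 4 \<le> n" using uI by auto
  have vR: "nbrs_R v = {m + 1, n - 1}" by (rule edge_rest_v_ends[OF x vP k vI])
  have vR': "M.nbrs_R v = {m + 1, n - 1}" using vR by (simp add: mirror_nbrs_R insert_commute)
  have x': "m - 1 - x + 1 \<le> m" using x by linarith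
  note vP' = mirror_nbrs_P_edge[OF x vP]
  consider "x = 0" | "x + 1 = m" | "1 \<le> x" "x + 2 \<le> m" using x by linarith
  then show False
  proof cases
    case 1
    then show False using edge_start_impossible vP k vR by simp
  next
    case 2
    then show False using M.edge_start_impossible vP' k vR' by simp
  next
    case 3
    have "\<not> E u (h (n - 1))" using edge_u_not_rest_last[OF 3(1) x vP] vR k by simp
    moreover have "\<not> E u ((h \<circ> mirror n m) (n - 1))"
      using M.edge_u_not_rest_last[OF _ x' vP'] vR' k 3 by simp
    then have "\<not> E u (h (m + 1))" using k by simp
    ultimately show False using theta_of_edge_rest_ends[OF 3 vP k vR] not_theta by blast
  qed
qed

lemma not_edge_sector_nbrs:
  assumes "x + 1 \<le> m"
  shows "nbrs_P v \<noteq> {x, x + 1}"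
  using edge_inner_nbrs_not_both edge_u_inner_nbr edge_v_inner_nbr assms by blast

theorem few_sector_nbrs:
  assumes "card (nbrs_P v) \<le> 2"
  shows "nbrs_P v \<subseteq> {0, m} \<and> card (nbrs_P v) \<le> 1 \<or> induced_iso_cube E (h ` {..<n} \<union> {u, v})"
proof -
  have fin: "finite (nbrs_P v)" by (rule finite_subset[of _ "{..m}"]) auto
  consider "nbrs_P v = {}" | w where "nbrs_P v = {w}" | x y where "nbrs_P v = {x, y}" "x < y"
  proof -
    consider "card (nbrs_P v) = 0" | "card (nbrs_P v) = 1" | "card (nbrs_P v) = 2"
      using assms by linarith
    then show thesis
    proof cases
      case 1
      then show thesis using that(1) fin by simp
    next
      case 2
      then show thesis using that(2) by (auto simp: card_Suc_eq)
    next
      case 3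
      then obtain x y where "nbrs_P v = {x, y}" "x \<noteq> y" by (auto simp: card_Suc_eq numeral_2_eq_2)
      then show thesis using that(3)[of x y] that(3)[of y x] by (cases "x < y") (auto simp: insert_commute)
    qed
  qed
  then show ?thesis
  proof cases
    case 1
    then show ?thesis by simp
  next
    case (2 w)
    then have "w \<le> m" by auto
    then show ?thesis using 2 cube_of_single_sector_nbr[of w] by (cases "w = 0 \<or> w = m") auto
  next
    case (3 x y)
    then have "y \<le> m" by auto
    then show ?thesis
      using 3 theta_of_sector_gap[of x y] not_theta not_edge_sector_nbrs[of x]
      by (cases "y = x + 1") auto
  qed
qed

end

lemma sector_as_arc:
  assumes hole: "is_hole V E H" and sec: "sector V E H u P u' u''" and l: "2 \<le> length P"
  obtains h m where "hole_enum V E (length H) h" "h ` {..<length H} = set H"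
    "P = map h [0..<Suc m]" "1 \<le> m" "m + 2 \<le> length H"
    "u' = h 0" "u'' = h m" "sector_nbrs E h m u = {0, m}"
proof -
  from sec have p: "is_path V E P" "set P \<subseteq> set H" and ends: "hd P = u'" "last P = u''"
    and Eu: "E u u'" "E u u''" and inner: "\<forall>x \<in> set P - {u', u''}. \<not> E u x"
    unfolding sector_def subpath_of_hole_def by blast+
  obtain h m where h: "hole_enum V E (length H) h" "h ` {..<length H} = set H"
    and P: "P = map h [0..<Suc m]" and m: "1 \<le> m" "m + 2 \<le> length H"
    using hole_path_as_arc[OF hole p l] by blast
  have u': "u' = h 0" using ends P by (simp add: upt_conv_Cons del: upt_Suc)
  have u'': "u'' = h m" using ends P by (simp add: last_map last_upt del: upt_Suc)
  have "E u (h i) \<longleftrightarrow> i = 0 \<or> i = m" if "i \<le> m" for i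
  proof (cases "i = 0 \<or> i = m")
    case False
    have "inj_on h {..<length H}" using h(1) by (simp add: hole_enum_def)
    moreover have "i \<in> {..<length H}" "0 \<in> {..<length H}" "m \<in> {..<length H}"
      using that m by auto
    ultimately have "h i \<noteq> h 0" "h i \<noteq> h m"
      using False by (metis inj_on_eq_iff)+
    then have "h i \<in> set P - {u', u''}" using that P u' u'' False by auto
    then show ?thesis using inner False by blast
  qed (use Eu u' u'' in auto)
  then have "sector_nbrs E h m u = {0, m}" by auto
  with h P m u' u'' show thesis by (rule that)
qed

lemma nbrs_in_arc:
  assumes h: "hole_enum V E n h" and m: "m < n"
  shows "nbrs_in E z (set (map h [0..<Suc m])) = h ` sector_nbrs E h m z"
    and "card (nbrs_in E z (set (map h [0..<Suc m]))) = card (sector_nbrs E h m z)"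
proof -
  have "set (map h [0..<Suc m]) = h ` {..m}"
    by (simp add: lessThan_Suc_atMost atLeast0LessThan del: upt_Suc)
  then show eq: "nbrs_in E z (set (map h [0..<Suc m])) = h ` sector_nbrs E h m z"
    by (auto simp: nbrs_in_def)
  have "inj_on h (sector_nbrs E h m z)"
    using h m by (auto simp: hole_enum_def inj_on_def)
  then show "card (nbrs_in E z (set (map h [0..<Suc m]))) = card (sector_nbrs E h m z)"
    unfolding eq by (rule card_image)
qed

lemma nbrs_in_two_ends:
  assumes sub: "nbrs_in E z S \<subseteq> {a, b}" and ab: "a = b \<or> E a b"
  shows "card (nbrs_in E z S) \<le> 1 \<and> nbrs_in E z S \<subseteq> {a, b} \<or> E a b \<and> E z a \<and> E z b"
proof (cases "card (nbrs_in E z S) \<le> 1")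
  case False
  have "card {a, b} \<le> 2" by (cases "a = b") auto
  then have "nbrs_in E z S = {a, b}"
    using False by (intro card_seteq[OF _ sub]) auto
  moreover from this have "a \<noteq> b" using False by auto
  ultimately show ?thesis using ab by (auto simp: nbrs_in_def)
qed (use sub in blast)

lemma short_sector_nbrs:
  assumes sec: "sector V E H u P u' u''" and l: "length P \<le> 2"
  shows "card (nbrs_in E v (set P)) \<le> 1 \<and> nbrs_in E v (set P) \<subseteq> {u', u''}
    \<or> E u' u'' \<and> E v u' \<and> E v u''"
proof -
  have p: "is_path V E P" "hd P = u'" "last P = u''"
    using sec by (simp_all add: sector_def subpath_of_hole_def)
  then obtain x xs where P: "P = x # xs" "length xs \<le> 1" using l by (cases P) (auto simp: is_path_def)
  then have "set P \<subseteq> {u', u''} \<and> (u' = u'' \<or> E u' u'')"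
    using p by (cases xs) (auto simp: is_path_iff_list_adj list_adj_Cons)
  then show ?thesis by (intro nbrs_in_two_ends) (auto simp: nbrs_in_def)
qed

lemma sector_nbrs_cases:
  assumes "graph V E" "in_class_C V E" and h: "hole_enum V E n h" "h ` {..<n} = set H"
    and m: "2 \<le> m" "m + 2 \<le> n" and maj: "major V E H u" "major V E H v"
    and "u \<noteq> v" "\<not> E u v" "sector_nbrs E h m u = {0, m}"
  shows "sector_nbrs E h m v \<subseteq> {0, m} \<and> card (sector_nbrs E h m v) \<le> 1
    \<or> card (sector_nbrs E h m v) \<ge> 3 \<or> induced_iso_cube E (set H \<union> {u, v})"
proof -
  interpret sector_setting V E n h m u v
    using assms major_imp_cyc_major[OF _ h] by unfold_locales (auto simp: major_def)
  show ?thesis using few_sector_nbrs h(2) by (cases "card (nbrs_P v) \<le> 2") auto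
qed

theorem lemma2p4:
  fixes V :: "'a set" and E :: "'a \<Rightarrow> 'a \<Rightarrow> bool"
  assumes "graph V E"
    and "in_class_C V E"
    and "is_hole V E H"
    and "major V E H u" and "major V E H v" and "u \<noteq> v" and "\<not> E u v"
    and "sector V E H u P u' u''"
  shows "(card (nbrs_in E v (set P)) \<le> 1 \<and> nbrs_in E v (set P) \<subseteq> {u', u''})
       \<or> (E u' u'' \<and> E v u' \<and> E v u'')
       \<or> card (nbrs_in E v (set P)) \<ge> 3
       \<or> induced_iso_cube E (set H \<union> {u, v})"
proof (cases "length P \<le> 2")
  case True
  then show ?thesis using short_sector_nbrs[OF assms(8)] by blast
next
  case False
  then have "2 \<le> length P" by simp
  then obtain h m where h: "hole_enum V E (length H) h" "h ` {..<length H} = set H"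
    and P: "P = map h [0..<Suc m]" and "1 \<le> m" and m: "m + 2 \<le> length H"
    and ends: "u' = h 0" "u'' = h m" and u: "sector_nbrs E h m u = {0, m}"
    by (rule sector_as_arc[OF assms(3,8)])
  have "2 \<le> m" using False unfolding P by simp
  have nbrs: "nbrs_in E v (set P) = h ` sector_nbrs E h m v"
    "card (nbrs_in E v (set P)) = card (sector_nbrs E h m v)"
    unfolding P using nbrs_in_arc[OF h(1)] m by simp_all
  from sector_nbrs_cases[OF assms(1,2) h \<open>2 \<le> m\<close> m assms(4-7) u] show ?thesis
  proof (elim disjE conjE)
    assume "sector_nbrs E h m v \<subseteq> {0, m}" "card (sector_nbrs E h m v) \<le> 1"
    then show ?thesis unfolding nbrs(2) unfolding nbrs(1) ends by auto
  qed (simp_all add: nbrs(2))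
qed

end
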